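(* Let $k\ge 4$ and $n\ge 4k^2$. Then there exist constants $c_k,C_k>0$ depending only on $k$ such that \[ c_kn\le crx_k(Q_n)\le C_kn. \] Thus $crx_k(Q_n)=\Theta_n(n)$.
   Context: $Q_n$ is the $n$-dimensional discrete binary cube: vertex set $\{0,1\}^n$, two vectors adjacent iff they differ in exactly one coordinate. An edge-coloured cycle is rainbow if its edges have distinct colours. For a graph $G$ in which any $k$ vertices lie on a common cycle, $crx_k(G)$ is the minimum number of colours in an edge-colouring of $G$ such that every set of $k$ vertices of $G$ lies in some rainbow cycle. *)

theory Defs
  imports Complex_Main
begin

definition graph_edges :: "'a set \<Rightarrow> ('a \<Rightarrow> 'a \<Rightarrow> bool) \<Rightarrow> 'a set set" where
  "graph_edges V adj = {{u, v} | u v. u \<in> V \<and> v \<in> V \<and> adj u v}"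

definition is_cycle :: "'a set \<Rightarrow> ('a \<Rightarrow> 'a \<Rightarrow> bool) \<Rightarrow> 'a list \<Rightarrow> bool" where
  "is_cycle V adj vs \<longleftrightarrow> length vs \<ge> 3 \<and> distinct vs \<and> set vs \<subseteq> V \<and>
     (\<forall>i < length vs. adj (vs ! i) (vs ! (Suc i mod length vs)))"

definition cycle_edges :: "'a list \<Rightarrow> 'a set set" where
  "cycle_edges vs = {{vs ! i, vs ! (Suc i mod length vs)} | i. i < length vs}"

definition rainbow_cycle :: "('a set \<Rightarrow> nat) \<Rightarrow> 'a list \<Rightarrow> bool" where
  "rainbow_cycle col vs \<longleftrightarrow> inj_on col (cycle_edges vs)"

definition crx :: "nat \<Rightarrow> 'a set \<Rightarrow> ('a \<Rightarrow> 'a \<Rightarrow> bool) \<Rightarrow> nat" where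
  "crx k V adj = (LEAST m. \<exists>col :: 'a set \<Rightarrow> nat.
      card (col ` graph_edges V adj) = m \<and>
      (\<forall>S. S \<subseteq> V \<and> card S = k \<longrightarrow>
         (\<exists>vs. is_cycle V adj vs \<and> S \<subseteq> set vs \<and> rainbow_cycle col vs)))"

definition cube_vertices :: "nat \<Rightarrow> bool list set" where
  "cube_vertices n = {xs. length xs = n}"

definition cube_adj :: "nat \<Rightarrow> bool list \<Rightarrow> bool list \<Rightarrow> bool" where
  "cube_adj n u v \<longleftrightarrow> card {i. i < n \<and> u ! i \<noteq> v ! i} = 1"

end

theory Submission
  imports Defs "HOL-Library.Countable"
begin

text \<open>
  Lower bound: if every k vertices lie on a rainbow cycle, take one through the all-false and the
  all-true vertex. It crosses every coordinate, and each cube edge flips exactly one coordinate,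
  so it has at least n edges, all of different colours.

  Upper bound: call the coordinates below 2k the head and the others the tail. An edge flipping d
  whose endpoints share the set L is coloured by d, the head of L and, for head flips only, the
  size of the tail of L modulo 2k; at most n 2^(2k) 2k colours occur. A cycle through given
  vertices X 0, ..., X (k-1) visits them in turn, alternately rewriting the head (through patterns
  beta j that occur nowhere else) and flipping disjoint blocks Zp j, Zq j of tail coordinates.
  The blocks avoid a set of coordinates separating the tails of the X j, and they are chosen so
  that the tail sizes modulo 2k encode the segment; then the cycle is simple and rainbow. This
  needs n \<ge> 9k^2; for 4k^2 \<le> n < 9k^2 the same cycles exist with blocks of size one, and an
  injective colouring of the at most 4^(9k^2) edges suffices.
\<close>

definition rainbow_connects :: "nat \<Rightarrow> 'a set \<Rightarrow> ('a \<Rightarrow> 'a \<Rightarrow> bool) \<Rightarrow> ('a set \<Rightarrow> nat) \<Rightarrow> bool" where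
  "rainbow_connects k V adj col \<longleftrightarrow> (\<forall>S. S \<subseteq> V \<and> card S = k \<longrightarrow>
     (\<exists>vs. is_cycle V adj vs \<and> S \<subseteq> set vs \<and> rainbow_cycle col vs))"

lemma crx_eq_Least:
  "crx k V adj = (LEAST m. \<exists>col. card (col ` graph_edges V adj) = m \<and> rainbow_connects k V adj col)"
  unfolding crx_def rainbow_connects_def by (rule refl)

lemma crx_le:
  assumes "rainbow_connects k V adj col"
  shows "crx k V adj \<le> card (col ` graph_edges V adj)"
  unfolding crx_eq_Least using assms by (blast intro: Least_le)

lemma crx_attained:
  assumes "rainbow_connects k V adj col"
  obtains col' where "rainbow_connects k V adj col'" "card (col' ` graph_edges V adj) = crx k V adj"
proof -
  have "\<exists>col'. card (col' ` graph_edges V adj) = crx k V adj \<and> rainbow_connects k V adj col'"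
    unfolding crx_eq_Least by (rule LeastI) (use assms in blast)
  then show ?thesis using that by blast
qed

lemma cycle_edges_subset_graph_edges:
  assumes "is_cycle V adj vs"
  shows "cycle_edges vs \<subseteq> graph_edges V adj"
proof
  fix e assume "e \<in> cycle_edges vs"
  then obtain i where i: "i < length vs" "e = {vs ! i, vs ! (Suc i mod length vs)}"
    unfolding cycle_edges_def by blast
  have "0 < length vs" using i(1) by linarith
  then have "Suc i mod length vs < length vs" by simp
  then have "vs ! i \<in> V" "vs ! (Suc i mod length vs) \<in> V"
    using i(1) assms nth_mem unfolding is_cycle_def by blast+
  moreover have "adj (vs ! i) (vs ! (Suc i mod length vs))"
    using i(1) assms unfolding is_cycle_def by blast
  ultimately show "e \<in> graph_edges V adj" unfolding graph_edges_def i(2) by blast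
qed

lemma graph_edges_subset_pairs: "graph_edges V adj \<subseteq> (\<lambda>(u, v). {u, v}) ` (V \<times> V)"
proof
  fix e assume "e \<in> graph_edges V adj"
  then obtain u v where "e = {u, v}" "(u, v) \<in> V \<times> V" unfolding graph_edges_def by blast
  then show "e \<in> (\<lambda>(u, v). {u, v}) ` (V \<times> V)"
    using rev_image_eqI[of "(u, v)" "V \<times> V" e "\<lambda>(u, v). {u, v}"] by simp
qed

lemma finite_graph_edges: "finite V \<Longrightarrow> finite (graph_edges V adj)"
  by (rule finite_subset[OF graph_edges_subset_pairs]) simp

lemma card_graph_edges_le:
  assumes "finite V"
  shows "card (graph_edges V adj) \<le> card V * card V"
proof -
  have "card (graph_edges V adj) \<le> card ((\<lambda>(u, v). {u, v}) ` (V \<times> V))"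
    by (rule card_mono[OF _ graph_edges_subset_pairs]) (use assms in simp)
  also have "\<dots> \<le> card (V \<times> V)" by (rule card_image_le) (use assms in simp)
  finally show ?thesis by (simp add: card_cartesian_product)
qed

lemma rainbow_connects_injective_colouring:
  assumes "finite V"
    and cycles: "\<And>S. S \<subseteq> V \<Longrightarrow> card S = k \<Longrightarrow> \<exists>vs. is_cycle V adj vs \<and> S \<subseteq> set vs"
  obtains col where "rainbow_connects k V adj col"
    "card (col ` graph_edges V adj) = card (graph_edges V adj)"
proof -
  obtain col :: "'a set \<Rightarrow> nat" and N where col: "col ` graph_edges V adj = {i. i < N}"
      "inj_on col (graph_edges V adj)"
    using finite_imp_inj_to_nat_seg[OF finite_graph_edges[OF assms(1)]] by blast
  have "rainbow_connects k V adj col"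
    unfolding rainbow_connects_def rainbow_cycle_def
    using cycles inj_on_subset[OF col(2) cycle_edges_subset_graph_edges] by blast
  then show ?thesis using that card_image[OF col(2)] by blast
qed

section \<open>Walks by coordinate flips\<close>

lemma sym_diff_left_cancel: "sym_diff A B = sym_diff A C \<longleftrightarrow> B = C"
  by blast

lemma sym_diff_Un_disjoint: "Z \<inter> R = {} \<Longrightarrow> sym_diff (T \<union> R) Z = sym_diff T Z \<union> R"
  by blast

lemma sym_diff_proper_subset_ne:
  "Z \<subseteq> sym_diff A B \<Longrightarrow> Z \<noteq> sym_diff A B \<Longrightarrow> sym_diff A Z \<noteq> B"
  by blast

fun flip_walk :: "'a set \<Rightarrow> 'a list \<Rightarrow> 'a set list" where
  "flip_walk v [] = []"
| "flip_walk v (d # ds) = v # flip_walk (sym_diff v {d}) ds"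

fun flip_end :: "'a set \<Rightarrow> 'a list \<Rightarrow> 'a set" where
  "flip_end v [] = v"
| "flip_end v (d # ds) = flip_end (sym_diff v {d}) ds"

lemma length_flip_walk [simp]: "length (flip_walk v ds) = length ds"
  by (induction ds arbitrary: v) auto

lemma flip_walk_append: "flip_walk v (xs @ ys) = flip_walk v xs @ flip_walk (flip_end v xs) ys"
  by (induction xs arbitrary: v) auto

lemma flip_end_append: "flip_end v (xs @ ys) = flip_end (flip_end v xs) ys"
  by (induction xs arbitrary: v) auto

lemma flip_walk_nth_step:
  "i < length ds \<Longrightarrow> sym_diff (flip_walk v ds ! i) {ds ! i} =
     (if Suc i < length ds then flip_walk v ds ! Suc i else flip_end v ds)"
proof (induction ds arbitrary: v i)
  case (Cons d ds)
  then show ?case by (cases i; cases ds) auto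
qed simp

lemma flip_walk_nth:
  "distinct ds \<Longrightarrow> i < length ds \<Longrightarrow> flip_walk v ds ! i = sym_diff v (set (take i ds))"
proof (induction ds arbitrary: v i)
  case (Cons d ds)
  then show ?case by (cases i) (auto dest: in_set_takeD)
qed simp

lemma flip_end_distinct: "distinct ds \<Longrightarrow> flip_end v ds = sym_diff v (set ds)"
  by (induction ds arbitrary: v) auto

lemma card_set_take: "distinct ds \<Longrightarrow> card (set (take i ds)) = min i (length ds)"
  by (simp add: distinct_card)

lemma flip_walk_memE:
  assumes "distinct ds" "w \<in> set (flip_walk v ds)"
  obtains Z where "Z \<subseteq> set ds" "Z \<noteq> set ds" "w = sym_diff v Z"
proof -
  obtain i where i: "i < length ds" "w = flip_walk v ds ! i"
    using assms(2) by (auto simp: in_set_conv_nth)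
  have "card (set (take i ds)) \<noteq> card (set ds)"
    using i(1) assms(1) card_set_take[of ds i] card_set_take[of ds "length ds"] by simp
  then show ?thesis
    using that[of "set (take i ds)"] flip_walk_nth[OF assms(1) i(1)] i(2) set_take_subset by metis
qed

lemma distinct_flip_walk:
  assumes "distinct ds"
  shows "distinct (flip_walk v ds)"
  unfolding distinct_conv_nth
proof (intro allI impI)
  fix i j assume ij: "i < length (flip_walk v ds)" "j < length (flip_walk v ds)" "i \<noteq> j"
  then have "card (set (take i ds)) \<noteq> card (set (take j ds))"
    using card_set_take[OF assms] by simp
  then have "sym_diff v (set (take i ds)) \<noteq> sym_diff v (set (take j ds))"
    using sym_diff_left_cancel by metis
  then show "flip_walk v ds ! i \<noteq> flip_walk v ds ! j"
    using ij flip_walk_nth[OF assms] by simp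
qed

lemma flip_walk_subset:
  "v \<subseteq> U \<Longrightarrow> set ds \<subseteq> U \<Longrightarrow> w \<in> set (flip_walk v ds) \<Longrightarrow> w \<subseteq> U"
proof (induction ds arbitrary: v)
  case (Cons d ds)
  have "sym_diff v {d} \<subseteq> U" "set ds \<subseteq> U" using Cons.prems(1,2) by auto
  moreover consider "w = v" | "w \<in> set (flip_walk (sym_diff v {d}) ds)"
    using Cons.prems(3) by auto
  ultimately show ?case using Cons.IH Cons.prems(1) by cases blast+
qed simp

text \<open>A step flipping d at w is recorded as (d, w - {d}): its direction together with the
  common part of the two endpoints of the edge.\<close>
definition flip_steps :: "'a set \<Rightarrow> 'a list \<Rightarrow> ('a \<times> 'a set) list" where
  "flip_steps v ds = map (\<lambda>(d, w). (d, w - {d})) (zip ds (flip_walk v ds))"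

lemma flip_steps_Nil [simp]: "flip_steps v [] = []"
  unfolding flip_steps_def by simp

lemma flip_steps_append: "flip_steps v (xs @ ys) = flip_steps v xs @ flip_steps (flip_end v xs) ys"
  unfolding flip_steps_def by (simp add: flip_walk_append)

lemma length_flip_steps [simp]: "length (flip_steps v ds) = length ds"
  unfolding flip_steps_def by simp

lemma flip_steps_nth:
  "i < length ds \<Longrightarrow> flip_steps v ds ! i = (ds ! i, flip_walk v ds ! i - {ds ! i})"
  unfolding flip_steps_def by simp

lemma map_fst_flip_steps: "map fst (flip_steps v ds) = ds"
  unfolding flip_steps_def by (simp add: comp_def split_def)

lemma flip_steps_memE:
  assumes "x \<in> set (flip_steps v ds)"
  obtains W where "W \<in> set (flip_walk v ds)" "fst x \<in> set ds" "snd x = W - {fst x}"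
proof -
  obtain i where i: "i < length ds" "x = flip_steps v ds ! i"
    using assms by (auto simp: in_set_conv_nth)
  then show ?thesis using that[of "flip_walk v ds ! i"] flip_steps_nth[OF i(1)] by simp
qed

lemma flip_walk_concat:
  assumes "\<And>j. j < m \<Longrightarrow> flip_end (b j) (f j) = b (Suc j)"
  shows "flip_walk (b 0) (concat (map f [0..<m])) = concat (map (\<lambda>j. flip_walk (b j) (f j)) [0..<m])"
    and "flip_steps (b 0) (concat (map f [0..<m])) = concat (map (\<lambda>j. flip_steps (b j) (f j)) [0..<m])"
    and "flip_end (b 0) (concat (map f [0..<m])) = b m"
  using assms
  by (induction m) (simp_all add: flip_walk_append flip_steps_append flip_end_append)

lemma distinct_concat_upt:
  assumes "\<And>j. j < m \<Longrightarrow> distinct (f j)"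
    and "\<And>i j. i < m \<Longrightarrow> j < m \<Longrightarrow> i \<noteq> j \<Longrightarrow> set (f i) \<inter> set (f j) = {}"
  shows "distinct (concat (map f [0..<m]))"
  using assms
proof (induction m)
  case (Suc m)
  have "set (f i) \<inter> set (f m) = {}" if "i < m" for i
    using Suc.prems(2)[of i m] that by simp
  then have "set (concat (map f [0..<m])) \<inter> set (f m) = {}" by (auto simp: disjoint_iff)
  then show ?case using Suc by simp
qed simp

lemma exists_add_mod_eq:
  assumes "0 < (M::nat)"
  shows "\<exists>e<M. (a + e) mod M = t mod M"
proof
  let ?e = "(M - a mod M + t) mod M"
  have "(a + ?e) mod M = (a mod M + (M - a mod M + t)) mod M"
    by (metis mod_add_eq mod_mod_trivial)
  also have "a mod M + (M - a mod M + t) = M + t"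
    using mod_less_divisor[OF assms, of a] by linarith
  finally show "?e < M \<and> (a + ?e) mod M = t mod M" using assms by simp
qed

text \<open>Flipping a suitable nonempty part of B moves the size of y into any residue class
  modulo M: add at most M points of B outside y, or remove at most M points of B inside y.\<close>
lemma exists_sym_diff_card_mod:
  assumes "finite y" "finite B" "2 * M - 1 \<le> card B" "0 < M"
  obtains Z where "Z \<subseteq> B" "Z \<noteq> {}" "card (sym_diff y Z) mod M = t mod M"
proof -
  have "card B = card (B \<inter> y) + card (B - y)" using assms(2) by (rule card_Int_Diff)
  then consider "M \<le> card (B - y)" | "M \<le> card (B \<inter> y)" using assms(3) by linarith
  then show ?thesis
  proof cases
    case 1
    obtain e where e: "e < M" "(Suc (card y) + e) mod M = t mod M"
      using exists_add_mod_eq[OF assms(4)] by blast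
    have "Suc e \<le> card (B - y)" using 1 e(1) by linarith
    then obtain Z where Z: "Z \<subseteq> B - y" "card Z = Suc e"
      by (rule obtain_subset_with_card_n)
    have "finite Z" using Z(1) assms(2) by (meson finite_Diff finite_subset)
    have "sym_diff y Z = y \<union> Z" using Z(1) by auto
    moreover have "card (y \<union> Z) = card y + card Z"
      using Z(1) \<open>finite Z\<close> assms(1) by (intro card_Un_disjoint) auto
    ultimately have "card (sym_diff y Z) = Suc (card y) + e" using Z(2) by simp
    moreover have "Z \<noteq> {}" "Z \<subseteq> B" using Z by auto
    ultimately show ?thesis using that[of Z] e(2) by simp
  next
    case 2
    have My: "M \<le> card y" using 2 card_mono[OF assms(1), of "B \<inter> y"] by simp
    obtain e where e: "e < M" "(card y - M + e) mod M = t mod M"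
      using exists_add_mod_eq[OF assms(4)] by blast
    have "M - e \<le> card (B \<inter> y)" using 2 by linarith
    then obtain Z where Z: "Z \<subseteq> B \<inter> y" "card Z = M - e"
      by (rule obtain_subset_with_card_n)
    have "finite Z" using Z(1) assms(2) by (meson finite_Int finite_subset)
    have "sym_diff y Z = y - Z" using Z(1) by auto
    then have "card (sym_diff y Z) = card y - M + e"
      using Z My e(1) \<open>finite Z\<close> by (simp add: card_Diff_subset)
    moreover have "Z \<noteq> {}" using Z(2) e(1) by auto
    ultimately show ?thesis using that[of Z] Z(1) e(2) by simp
  qed
qed

lemma exists_disjoint_subsets_with_card:
  assumes "finite F" "m * s \<le> card F"
  shows "\<exists>B. (\<forall>v<m. B v \<subseteq> F \<and> card (B v) = s) \<and>
             (\<forall>v<m. \<forall>u<m. v \<noteq> u \<longrightarrow> B v \<inter> B u = {})"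
  using assms
proof (induction m arbitrary: F)
  case (Suc m)
  obtain T where T: "T \<subseteq> F" "card T = s"
    using obtain_subset_with_card_n[of s F] Suc.prems(2) by auto
  have "m * s \<le> card (F - T)"
    using Suc.prems T by (simp add: card_Diff_subset finite_subset)
  then obtain B where B: "\<forall>v<m. B v \<subseteq> F - T \<and> card (B v) = s"
      "\<forall>v<m. \<forall>u<m. v \<noteq> u \<longrightarrow> B v \<inter> B u = {}"
    using Suc.IH[of "F - T"] Suc.prems(1) by auto
  let ?B = "B(m := T)"
  have "\<forall>v<Suc m. ?B v \<subseteq> F \<and> card (?B v) = s" using B(1) T by (auto simp: less_Suc_eq)
  moreover have "\<forall>v<Suc m. \<forall>u<Suc m. v \<noteq> u \<longrightarrow> ?B v \<inter> ?B u = {}"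
    using B by (auto simp: less_Suc_eq)
  ultimately show ?case by blast
qed simp

lemma exists_disjoint_flip_sets_mod:
  assumes "finite F" "M * s \<le> card F" "1 \<le> s" "0 < M" "\<forall>t<M. finite (T t)"
  shows "\<exists>Z. (\<forall>t<M. Z t \<subseteq> F \<and> Z t \<noteq> {}) \<and> (\<forall>t<M. \<forall>u<M. t \<noteq> u \<longrightarrow> Z t \<inter> Z u = {}) \<and>
    (2 * M - 1 \<le> s \<longrightarrow> (\<forall>t<M. card (sym_diff (T t) (Z t)) mod M = t))"
proof -
  obtain B where "\<forall>t<M. B t \<subseteq> F \<and> card (B t) = s" "\<forall>t<M. \<forall>u<M. t \<noteq> u \<longrightarrow> B t \<inter> B u = {}"
    using exists_disjoint_subsets_with_card[OF assms(1,2)] by metis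
  note B = this[rule_format]
  have "\<exists>Z. Z \<subseteq> B t \<and> Z \<noteq> {} \<and> (2 * M - 1 \<le> s \<longrightarrow> card (sym_diff (T t) Z) mod M = t)"
    if t: "t < M" for t
  proof (cases "2 * M - 1 \<le> s")
    case True
    have "finite (B t)" using B(1)[OF t] assms(1) by (meson finite_subset)
    moreover have "2 * M - 1 \<le> card (B t)" using B(1)[OF t] True by simp
    ultimately obtain Z where "Z \<subseteq> B t" "Z \<noteq> {}" "card (sym_diff (T t) Z) mod M = t mod M"
      by (rule exists_sym_diff_card_mod[OF assms(5)[rule_format, OF t]]) (rule assms(4))
    then show ?thesis using t by (intro exI[of _ Z]) simp
  next
    case False
    then show ?thesis using B(1)[OF t] assms(3) by (intro exI[of _ "B t"]) auto
  qed
  then obtain Z where Z: "\<And>t. t < M \<Longrightarrow> Z t \<subseteq> B t \<and> Z t \<noteq> {} \<and>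
      (2 * M - 1 \<le> s \<longrightarrow> card (sym_diff (T t) (Z t)) mod M = t)"
    by metis
  have "Z t \<subseteq> F" "Z t \<noteq> {}" if "t < M" for t using Z[OF that] B(1)[OF that] by blast+
  moreover have "Z t \<inter> Z u = {}" if "t < M" "u < M" "t \<noteq> u" for t u
    using Z[OF that(1)] Z[OF that(2)] B(2)[OF that] by blast
  moreover have "card (sym_diff (T t) (Z t)) mod M = t" if "2 * M - 1 \<le> s" "t < M" for t
    using Z[OF that(2)] that(1) by simp
  ultimately show ?thesis by (intro exI[of _ Z] conjI allI impI)
qed

lemma exists_separating_set:
  assumes "finite Y"
  obtains Sep where "finite Sep" "card Sep \<le> card Y * card Y"
    "\<And>a b. a \<in> Y \<Longrightarrow> b \<in> Y \<Longrightarrow> a \<noteq> b \<Longrightarrow> sym_diff a b \<inter> Sep \<noteq> {}"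
proof
  define sep where "sep a b = (SOME i. i \<in> sym_diff a b)" for a b :: "'a set"
  show "finite ((\<lambda>(a, b). sep a b) ` (Y \<times> Y))" using assms by simp
  show "card ((\<lambda>(a, b). sep a b) ` (Y \<times> Y)) \<le> card Y * card Y"
    using card_image_le[of "Y \<times> Y" "\<lambda>(a, b). sep a b"] assms by (simp add: card_cartesian_product)
  fix a b assume ab: "a \<in> Y" "b \<in> Y" "a \<noteq> b"
  then have "sep a b \<in> sym_diff a b" unfolding sep_def by (metis (no_types) some_in_eq Un_empty Diff_eq_empty_iff subset_antisym)
  moreover have "sep a b \<in> (\<lambda>(a, b). sep a b) ` (Y \<times> Y)" using ab by force
  ultimately show "sym_diff a b \<inter> (\<lambda>(a, b). sep a b) ` (Y \<times> Y) \<noteq> {}" by blast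
qed

lemma obtain_superset_with_card:
  assumes "finite V" "A \<subseteq> V" "card A \<le> k" "k \<le> card V"
  obtains S where "A \<subseteq> S" "S \<subseteq> V" "card S = k"
proof -
  have "k - card A \<le> card (V - A)"
    using assms by (simp add: card_Diff_subset finite_subset)
  then obtain T where T: "T \<subseteq> V - A" "card T = k - card A"
    by (rule obtain_subset_with_card_n)
  have "finite A" "finite T" using assms(1,2) T(1) finite_subset by blast+
  then have "card (A \<union> T) = k" using T assms(3) by (subst card_Un_disjoint) auto
  then show ?thesis using that[of "A \<union> T"] T(1) assms(2) by blast
qed

lemma exists_cyclic_transition:
  assumes "i0 < length xs" "i1 < length xs" "\<not> P (xs ! i0)" "P (xs ! i1)"
  shows "\<exists>i<length xs. \<not> P (xs ! i) \<and> P (xs ! (Suc i mod length xs))"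
proof -
  let ?L = "length xs"
  define f where "f m = P (xs ! ((i0 + m) mod ?L))" for m
  have "(i0 + (i1 + ?L - i0)) mod ?L = i1" using assms(1,2) by simp
  then have "f (i1 + ?L - i0)" "\<not> f 0" using assms unfolding f_def by simp_all
  then obtain m where m: "\<not> f m" "f (Suc m)" using ex_least_nat_less[of f] by blast
  have "Suc ((i0 + m) mod ?L) mod ?L = (i0 + Suc m) mod ?L" by (simp add: mod_Suc_eq)
  then show ?thesis using m assms(1) unfolding f_def
    by (metis mod_less_divisor gr_implies_not0 not_gr0 less_nat_zero_code)
qed

section \<open>The cube and the lower bound\<close>

definition bits :: "nat \<Rightarrow> nat set \<Rightarrow> bool list" where
  "bits n A = map (\<lambda>i. i \<in> A) [0..<n]"

definition ones :: "bool list \<Rightarrow> nat set" where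
  "ones xs = {i. i < length xs \<and> xs ! i}"

lemma length_bits [simp]: "length (bits n A) = n"
  unfolding bits_def by simp

lemma nth_bits [simp]: "i < n \<Longrightarrow> bits n A ! i = (i \<in> A)"
  unfolding bits_def by simp

lemma ones_bits: "A \<subseteq> {..<n} \<Longrightarrow> ones (bits n A) = A"
  unfolding ones_def by auto

lemma bits_ones: "length xs = n \<Longrightarrow> bits n (ones xs) = xs"
  unfolding ones_def bits_def by (auto intro: nth_equalityI)

lemma ones_subset: "ones xs \<subseteq> {..<length xs}"
  unfolding ones_def by auto

lemma inj_on_bits: "inj_on (bits n) (Pow {..<n})"
  by (rule inj_on_inverseI[of _ ones]) (simp add: ones_bits)

lemma bits_in_cube_vertices: "bits n A \<in> cube_vertices n"
  unfolding cube_vertices_def by simp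

lemma differing_coords_eq_sym_diff:
  "length u = n \<Longrightarrow> length v = n \<Longrightarrow> {i. i < n \<and> u ! i \<noteq> v ! i} = sym_diff (ones u) (ones v)"
  unfolding ones_def by auto

lemma cube_adj_bits_sym_diff_singleton:
  "A \<subseteq> {..<n} \<Longrightarrow> d < n \<Longrightarrow> cube_adj n (bits n A) (bits n (sym_diff A {d}))"
proof -
  assume A: "A \<subseteq> {..<n}" and d: "d < n"
  then have "sym_diff A {d} \<subseteq> {..<n}" by auto
  then have "{i. i < n \<and> bits n A ! i \<noteq> bits n (sym_diff A {d}) ! i} = sym_diff A (sym_diff A {d})"
    using differing_coords_eq_sym_diff[of "bits n A" n] A by (simp add: ones_bits)
  also have "\<dots> = {d}" by blast
  finally show ?thesis unfolding cube_adj_def by simp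
qed

lemma cube_vertices_eq: "cube_vertices n = {xs. set xs \<subseteq> UNIV \<and> length xs = n}"
  unfolding cube_vertices_def by simp

lemma finite_cube_vertices: "finite (cube_vertices n)"
  unfolding cube_vertices_eq by (rule finite_lists_length_eq) simp

lemma card_cube_vertices: "card (cube_vertices n) = 2 ^ n"
  unfolding cube_vertices_eq using card_lists_length_eq[of "UNIV :: bool set" n] by simp

lemma cube_adj_unique_coord:
  assumes "cube_adj n a b" "t < n" "t' < n" "a ! t \<noteq> b ! t" "a ! t' \<noteq> b ! t'"
  shows "t = t'"
proof -
  obtain c where "{i. i < n \<and> a ! i \<noteq> b ! i} = {c}"
    using assms(1) unfolding cube_adj_def by (rule card_1_singletonE)
  moreover have "t \<in> {i. i < n \<and> a ! i \<noteq> b ! i}" "t' \<in> {i. i < n \<and> a ! i \<noteq> b ! i}"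
    using assms(2-5) by simp_all
  ultimately show ?thesis by (metis singletonD)
qed

lemma finite_cycle_edges: "finite (cycle_edges vs)"
  unfolding cycle_edges_def by (simp add: finite_image_set)

lemma cube_cycle_crosses_coord:
  assumes "is_cycle (cube_vertices n) (cube_adj n) vs" "u \<in> set vs" "v \<in> set vs" "u ! t \<noteq> v ! t"
  shows "\<exists>e\<in>cycle_edges vs. \<exists>a b. e = {a, b} \<and> cube_adj n a b \<and> a ! t \<noteq> b ! t"
proof -
  obtain i0 i1 where i: "i0 < length vs" "vs ! i0 = u" "i1 < length vs" "vs ! i1 = v"
    using assms(2,3) by (meson in_set_conv_nth)
  then obtain i where "i < length vs" "vs ! i ! t \<noteq> v ! t" "vs ! (Suc i mod length vs) ! t = v ! t"
    using exists_cyclic_transition[of i0 vs i1 "\<lambda>x. x ! t = v ! t"] assms(4) by auto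
  moreover from this(1) have "{vs ! i, vs ! (Suc i mod length vs)} \<in> cycle_edges vs"
    unfolding cycle_edges_def by blast
  moreover have "cube_adj n (vs ! i) (vs ! (Suc i mod length vs))"
    using assms(1) \<open>i < length vs\<close> unfolding is_cycle_def by blast
  ultimately show ?thesis by metis
qed

lemma card_cycle_edges_ge_dim:
  assumes "is_cycle (cube_vertices n) (cube_adj n) vs"
    and "replicate n False \<in> set vs" "replicate n True \<in> set vs"
  shows "n \<le> card (cycle_edges vs)"
proof -
  have "\<forall>t\<in>{..<n}. \<exists>e\<in>cycle_edges vs. \<exists>a b. e = {a, b} \<and> cube_adj n a b \<and> a ! t \<noteq> b ! t"
    using cube_cycle_crosses_coord[OF assms] by simp
  then obtain g where g: "\<And>t. t < n \<Longrightarrow> g t \<in> cycle_edges vs"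
      "\<And>t. t < n \<Longrightarrow> \<exists>a b. g t = {a, b} \<and> cube_adj n a b \<and> a ! t \<noteq> b ! t"
    by (metis lessThan_iff)
  have "inj_on g {..<n}"
  proof (rule inj_onI)
    fix t t' assume t: "t \<in> {..<n}" "t' \<in> {..<n}" "g t = g t'"
    obtain a b where ab: "g t = {a, b}" "cube_adj n a b" "a ! t \<noteq> b ! t" using g(2) t(1) by blast
    obtain a' b' where ab': "g t' = {a', b'}" "a' ! t' \<noteq> b' ! t'" using g(2) t(2) by blast
    have "a ! t' \<noteq> b ! t'" using ab(1) ab'(2) t(3) unfolding ab'(1) by (auto simp: doubleton_eq_iff)
    then show "t = t'" using cube_adj_unique_coord[OF ab(2)] t(1,2) ab(3) by simp
  qed
  then have "n = card (g ` {..<n})" by (simp add: card_image)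
  also have "\<dots> \<le> card (cycle_edges vs)" using g(1) by (intro card_mono finite_cycle_edges) auto
  finally show ?thesis .
qed

lemma cube_colours_ge_dim:
  assumes "rainbow_connects k (cube_vertices n) (cube_adj n) col" "2 \<le> k" "k \<le> 2 ^ n" "1 \<le> n"
  shows "n \<le> card (col ` graph_edges (cube_vertices n) (cube_adj n))"
proof -
  let ?w0 = "replicate n False" and ?w1 = "replicate n True"
  have ends: "{?w0, ?w1} \<subseteq> cube_vertices n" "card {?w0, ?w1} = 2"
    using assms(4) unfolding cube_vertices_def by auto
  obtain S where S: "{?w0, ?w1} \<subseteq> S" "S \<subseteq> cube_vertices n" "card S = k"
    using obtain_superset_with_card[OF finite_cube_vertices ends(1)] ends(2) assms(2,3)
    by (metis card_cube_vertices)
  then obtain vs where vs: "is_cycle (cube_vertices n) (cube_adj n) vs" "S \<subseteq> set vs" "rainbow_cycle col vs"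
    using assms(1) unfolding rainbow_connects_def by blast
  have "n \<le> card (cycle_edges vs)" using card_cycle_edges_ge_dim vs(1,2) S(1) by blast
  also have "\<dots> = card (col ` cycle_edges vs)"
    using vs(3) unfolding rainbow_cycle_def by (simp add: card_image)
  also have "\<dots> \<le> card (col ` graph_edges (cube_vertices n) (cube_adj n))"
    using cycle_edges_subset_graph_edges[OF vs(1)]
    by (intro card_mono finite_imageI finite_graph_edges finite_cube_vertices image_mono)
  finally show ?thesis .
qed

definition edge_label :: "nat \<Rightarrow> nat \<times> nat set \<Rightarrow> nat \<times> nat set \<times> nat" where
  "edge_label k x = (fst x, snd x \<inter> {..<2*k},
     if fst x < 2*k then card (snd x - {..<2*k}) mod (2*k) else 0)"

definition encode_label :: "nat \<times> nat set \<times> nat \<Rightarrow> nat" where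
  "encode_label c = to_nat (fst c, sorted_list_of_set (fst (snd c)), snd (snd c))"

definition cube_colour :: "nat \<Rightarrow> bool list set \<Rightarrow> nat" where
  "cube_colour k E = encode_label (edge_label k
     (the_elem (\<Union> (ones ` E) - \<Inter> (ones ` E)), \<Inter> (ones ` E)))"

lemma fst_edge_label [simp]: "fst (edge_label k x) = fst x"
  unfolding edge_label_def by simp

lemma encode_edge_label_inj:
  "encode_label (edge_label k x) = encode_label (edge_label k x') \<Longrightarrow> edge_label k x = edge_label k x'"
  unfolding encode_label_def edge_label_def
  by (auto simp: prod_eq_iff dest: sorted_list_of_set_inject)

lemma cube_colour_edge:
  assumes "A \<subseteq> {..<n}" "d < n"
  shows "cube_colour k {bits n A, bits n (sym_diff A {d})} = encode_label (edge_label k (d, A - {d}))"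
proof -
  have "sym_diff A {d} \<subseteq> {..<n}" using assms by auto
  then have "ones ` {bits n A, bits n (sym_diff A {d})} = {A, sym_diff A {d}}"
    using ones_bits assms(1) by simp
  moreover have "\<Inter> {A, sym_diff A {d}} = A - {d}" "\<Union> {A, sym_diff A {d}} - (A - {d}) = {d}"
    by auto
  ultimately show ?thesis unfolding cube_colour_def by simp
qed

lemma cube_edgeE:
  assumes "E \<in> graph_edges (cube_vertices n) (cube_adj n)"
  obtains A d where "A \<subseteq> {..<n}" "d < n" "E = {bits n A, bits n (sym_diff A {d})}"
proof -
  obtain u v where uv: "E = {u, v}" "length u = n" "length v = n" "cube_adj n u v"
    using assms unfolding graph_edges_def cube_vertices_def by blast
  then obtain d where d: "sym_diff (ones u) (ones v) = {d}"
    using differing_coords_eq_sym_diff[OF uv(2,3)] card_1_singletonE unfolding cube_adj_def by metis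
  then have "d < n" using differing_coords_eq_sym_diff[OF uv(2,3)] by blast
  moreover have "ones v = sym_diff (ones u) {d}" using d by blast
  then have "E = {bits n (ones u), bits n (sym_diff (ones u) {d})}"
    using uv bits_ones by metis
  ultimately show ?thesis using that ones_subset uv(2) by blast
qed

lemma card_cube_colours_le:
  assumes "0 < k"
  shows "card (cube_colour k ` graph_edges (cube_vertices n) (cube_adj n)) \<le> n * 2 ^ (2*k) * (2*k)"
proof -
  let ?T = "{..<n} \<times> Pow {..<2*k} \<times> {..<2*k}"
  have "cube_colour k ` graph_edges (cube_vertices n) (cube_adj n) \<subseteq> encode_label ` ?T"
  proof
    fix c assume "c \<in> cube_colour k ` graph_edges (cube_vertices n) (cube_adj n)"
    then obtain E where E: "E \<in> graph_edges (cube_vertices n) (cube_adj n)" "c = cube_colour k E"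
      by blast
    from E(1) obtain A d where "A \<subseteq> {..<n}" "d < n" "E = {bits n A, bits n (sym_diff A {d})}"
      by (rule cube_edgeE)
    moreover have "edge_label k (d, A - {d}) \<in> ?T" if "d < n"
      unfolding edge_label_def using assms that by auto
    ultimately show "c \<in> encode_label ` ?T" using cube_colour_edge E(2) by auto
  qed
  then have "card (cube_colour k ` graph_edges (cube_vertices n) (cube_adj n)) \<le> card (encode_label ` ?T)"
    by (intro card_mono) simp_all
  also have "\<dots> \<le> card ?T" by (rule card_image_le) simp
  also have "card ?T = n * 2 ^ (2*k) * (2*k)" by (simp add: card_cartesian_product card_Pow)
  finally show ?thesis .
qed

section \<open>A rainbow cycle through k vertices\<close>

text \<open>Segment j of the cycle starts at
  beta (prv j) \<union> p j, turns the head into tau j = X j \<inter> H, flips Zp j (passing X j) and then Zq j,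
  so that the tail becomes q j; it then turns the head into beta j and the tail into p (nxt j).
  The head patterns beta j are pairwise distinct and distinct from every tau l, and the tails
  p j, q j are pairwise distinct because distinct tails of the X j differ outside all Zp, Zq.\<close>
locale cycle_construction =
  fixes k n :: nat and X Zp Zq :: "nat \<Rightarrow> nat set"
  assumes two_le_k: "2 \<le> k" and head_le_n: "2 * k \<le> n"
    and X_subset: "\<And>j. j < k \<Longrightarrow> X j \<subseteq> {..<n}"
    and X_inj: "\<And>j l. j < k \<Longrightarrow> l < k \<Longrightarrow> X j = X l \<Longrightarrow> j = l"
    and Zp_nonempty: "\<And>j. j < k \<Longrightarrow> Zp j \<noteq> {}"
    and Zq_nonempty: "\<And>j. j < k \<Longrightarrow> Zq j \<noteq> {}"
    and Zp_subset: "\<And>j. j < k \<Longrightarrow> Zp j \<subseteq> {2*k..<n}"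
    and Zq_subset: "\<And>j. j < k \<Longrightarrow> Zq j \<subseteq> {2*k..<n}"
    and Zp_disjoint: "\<And>j l. j < k \<Longrightarrow> l < k \<Longrightarrow> j \<noteq> l \<Longrightarrow> Zp j \<inter> Zp l = {}"
    and Zq_disjoint: "\<And>j l. j < k \<Longrightarrow> l < k \<Longrightarrow> j \<noteq> l \<Longrightarrow> Zq j \<inter> Zq l = {}"
    and Zp_Zq_disjoint: "\<And>j l. j < k \<Longrightarrow> l < k \<Longrightarrow> Zp j \<inter> Zq l = {}"
    and tails_separated: "\<And>j l. j < k \<Longrightarrow> l < k \<Longrightarrow> X j - {..<2*k} \<noteq> X l - {..<2*k} \<Longrightarrow>
       \<exists>i \<in> sym_diff (X j - {..<2*k}) (X l - {..<2*k}). \<forall>m<k. i \<notin> Zp m \<and> i \<notin> Zq m"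
begin

definition H :: "nat set" where "H = {..<2*k}"
definition tau :: "nat \<Rightarrow> nat set" where "tau j = X j \<inter> H"
definition y :: "nat \<Rightarrow> nat set" where "y j = X j - H"
definition p :: "nat \<Rightarrow> nat set" where "p j = sym_diff (y j) (Zp j)"
definition q :: "nat \<Rightarrow> nat set" where "q j = sym_diff (y j) (Zq j)"
definition nxt :: "nat \<Rightarrow> nat" where "nxt j = Suc j mod k"
definition prv :: "nat \<Rightarrow> nat" where "prv j = (j + k - 1) mod k"

text \<open>beta j disagrees with every tau i in the coordinates i and k + i, except that it agrees
  with tau j in j and with tau (nxt j) in k + nxt j.\<close>
definition base :: "nat set" where
  "base = {i. i < k \<and> i \<notin> X i} \<union> {i. k \<le> i \<and> i < 2*k \<and> i \<notin> X (i - k)}"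
definition beta :: "nat \<Rightarrow> nat set" where "beta j = sym_diff base {j, k + nxt j}"

lemma nxt_less: "nxt j < k"
  using two_le_k unfolding nxt_def by simp

lemma prv_less: "prv j < k"
  using two_le_k unfolding prv_def by simp

lemma nxt_prv: "j < k \<Longrightarrow> nxt (prv j) = j"
  unfolding nxt_def prv_def using two_le_k by (cases j) (simp_all add: mod_Suc_eq Suc_diff_le)

lemma prv_Suc: "j < k \<Longrightarrow> prv (Suc j) = j"
  unfolding prv_def using two_le_k by simp

lemma nxt_neq: "j < k \<Longrightarrow> nxt j \<noteq> j"
  unfolding nxt_def using two_le_k by (cases "Suc j = k") auto

lemma nxt_eq_imp_prv: "l < k \<Longrightarrow> j < k \<Longrightarrow> nxt l = j \<Longrightarrow> l = prv j"
  unfolding nxt_def prv_def using two_le_k by (cases "Suc l = k") auto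

lemma beta_low: "i < k \<Longrightarrow> j < k \<Longrightarrow> i \<in> beta j \<longleftrightarrow> (if i = j then i \<in> X i else i \<notin> X i)"
  unfolding beta_def base_def by auto

lemma beta_high: "i < k \<Longrightarrow> j < k \<Longrightarrow>
    k + i \<in> beta j \<longleftrightarrow> (if i = nxt j then k + i \<in> X i else k + i \<notin> X i)"
  unfolding beta_def base_def by auto

lemma beta_subset_H: "j < k \<Longrightarrow> beta j \<subseteq> H"
  unfolding beta_def base_def H_def using nxt_less[of j] by auto

lemma tau_subset_H: "tau j \<subseteq> H"
  unfolding tau_def by auto

lemma mem_tau_iff: "i \<in> H \<Longrightarrow> i \<in> tau j \<longleftrightarrow> i \<in> X j"
  unfolding tau_def by auto

lemma low_in_H: "i < k \<Longrightarrow> i \<in> H" and high_in_H: "i < k \<Longrightarrow> k + i \<in> H"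
  unfolding H_def by simp_all

lemma beta_inj: "j < k \<Longrightarrow> l < k \<Longrightarrow> beta j = beta l \<Longrightarrow> j = l"
  using beta_low[of j j] beta_low[of j l] by metis

lemma beta_ne_tau: "j < k \<Longrightarrow> l < k \<Longrightarrow> beta j \<noteq> tau l"
  using beta_high[of j j] nxt_neq[of j] mem_tau_iff[OF high_in_H[of j]]
    beta_low[of l j] mem_tau_iff[OF low_in_H[of l]]
  by (cases "l = j") auto

text \<open>Leaving tau j towards beta j we meet no other beta l, as these disagree with tau j in j.\<close>
lemma beta_ne_between_tau_beta:
  assumes "j < k" "l < k" "l \<noteq> j" "Z \<subseteq> sym_diff (tau j) (beta j)"
  shows "beta l \<noteq> sym_diff (tau j) Z"
proof -
  have "j \<in> beta j \<longleftrightarrow> j \<in> X j" "j \<in> tau j \<longleftrightarrow> j \<in> X j"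
    using beta_low[of j j] mem_tau_iff[OF low_in_H[of j]] assms(1) by simp_all
  then have "j \<in> sym_diff (tau j) Z \<longleftrightarrow> j \<in> X j" using assms(4) by blast
  moreover have "j \<in> beta l \<longleftrightarrow> j \<notin> X j" using beta_low[of j l] assms by auto
  ultimately show ?thesis by blast
qed

text \<open>Entering tau j from beta (prv j) we meet no other beta l, as these disagree with
  tau j in k + j.\<close>
lemma beta_ne_between_beta_tau:
  assumes "j < k" "l < k" "l \<noteq> prv j" "Z \<subseteq> sym_diff (beta (prv j)) (tau j)"
  shows "beta l \<noteq> sym_diff (beta (prv j)) Z"
proof -
  have "k + j \<in> beta (prv j) \<longleftrightarrow> k + j \<in> X j" "k + j \<in> tau j \<longleftrightarrow> k + j \<in> X j"
    using beta_high[of j "prv j"] mem_tau_iff[OF high_in_H[of j]] assms(1) prv_less nxt_prv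
    by simp_all
  then have "k + j \<in> sym_diff (beta (prv j)) Z \<longleftrightarrow> k + j \<in> X j" using assms(4) by blast
  moreover have "nxt l \<noteq> j" using nxt_eq_imp_prv[of l j] assms by auto
  then have "k + j \<in> beta l \<longleftrightarrow> k + j \<notin> X j" using beta_high[of j l] assms by auto
  ultimately show ?thesis by blast
qed

definition flip_coords :: "nat set" where "flip_coords = (\<Union>m<k. Zp m \<union> Zq m)"

lemma Zp_subset_flip_coords: "j < k \<Longrightarrow> Zp j \<subseteq> flip_coords"
  and Zq_subset_flip_coords: "j < k \<Longrightarrow> Zq j \<subseteq> flip_coords"
  unfolding flip_coords_def by auto

lemma tail_sym_diff_eq_imp:
  assumes "j < k" "l < k" "Z1 \<subseteq> flip_coords" "Z2 \<subseteq> flip_coords"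
    and eq: "sym_diff (y j) Z1 = sym_diff (y l) Z2"
  shows "y j = y l" "Z1 = Z2"
proof -
  show "y j = y l"
  proof (rule ccontr)
    assume "y j \<noteq> y l"
    then obtain i where i: "i \<in> sym_diff (y j) (y l)" "i \<notin> flip_coords"
      using tails_separated[OF assms(1,2)] unfolding y_def H_def flip_coords_def by blast
    then have "i \<notin> Z1" "i \<notin> Z2" using assms(3,4) by auto
    then have "i \<in> sym_diff (y j) Z1 \<longleftrightarrow> i \<notin> sym_diff (y l) Z2" using i(1) by blast
    then show False using eq by metis
  qed
  then show "Z1 = Z2" using eq sym_diff_left_cancel by metis
qed

lemma p_eq_tail_flip_imp:
  assumes "j < k" "l < k" "Z \<subseteq> Zp l \<union> Zq l" "p j = sym_diff (y l) Z"
  shows "j = l"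
proof (rule ccontr)
  assume "j \<noteq> l"
  then have "Zp j \<inter> (Zp l \<union> Zq l) = {}" using Zp_disjoint Zp_Zq_disjoint assms(1,2) by blast
  moreover have "Z \<subseteq> flip_coords"
    using assms(3) Zp_subset_flip_coords[OF assms(2)] Zq_subset_flip_coords[OF assms(2)] by blast
  then have "Zp j = Z"
    using assms(4) unfolding p_def
    by (rule tail_sym_diff_eq_imp(2)[OF assms(1,2) Zp_subset_flip_coords[OF assms(1)]])
  ultimately show False using assms(3) Zp_nonempty[OF assms(1)] by blast
qed

lemma q_eq_tail_flip_imp:
  assumes "j < k" "l < k" "Z \<subseteq> Zp l \<union> Zq l" "q j = sym_diff (y l) Z"
  shows "j = l"
proof (rule ccontr)
  assume "j \<noteq> l"
  then have "Zq j \<inter> (Zp l \<union> Zq l) = {}" using Zq_disjoint Zp_Zq_disjoint assms(1,2) by blast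
  moreover have "Z \<subseteq> flip_coords"
    using assms(3) Zp_subset_flip_coords[OF assms(2)] Zq_subset_flip_coords[OF assms(2)] by blast
  then have "Zq j = Z"
    using assms(4) unfolding q_def
    by (rule tail_sym_diff_eq_imp(2)[OF assms(1,2) Zq_subset_flip_coords[OF assms(1)]])
  ultimately show False using assms(3) Zq_nonempty[OF assms(1)] by blast
qed

lemma p_inj: assumes "j < k" "l < k" "p j = p l" shows "j = l"
  using assms(3) unfolding p_def[of l] by (rule p_eq_tail_flip_imp[OF assms(1,2) Un_upper1])

lemma q_inj: assumes "j < k" "l < k" "q j = q l" shows "j = l"
  using assms(3) unfolding q_def[of l] by (rule q_eq_tail_flip_imp[OF assms(1,2) Un_upper2])

lemma p_ne_q: assumes "j < k" "l < k" shows "p j \<noteq> q l"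
proof
  assume eq: "p j = q l"
  then have "j = l"
    unfolding q_def[of l] by (rule p_eq_tail_flip_imp[OF assms(1,2) Un_upper2])
  with eq have "Zp l = Zq l" unfolding p_def q_def using sym_diff_left_cancel by metis
  then show False using Zp_Zq_disjoint[of l l] Zp_nonempty[of l] assms(2) by simp
qed

lemma X_eq_tau_un_y: "X j = tau j \<union> y j"
  unfolding tau_def y_def by auto

lemma same_head_tail_flip_imp:
  assumes "j < k" "l < k" "Z \<subseteq> Zp j \<union> Zq j" "Z' \<subseteq> Zp l \<union> Zq l"
    "sym_diff (y j) Z = sym_diff (y l) Z'" "tau j = tau l"
  shows "j = l"
proof -
  have "y j = y l"
    using tail_sym_diff_eq_imp(1)[OF assms(1,2) _ _ assms(5)] assms(3,4)
      Zp_subset_flip_coords Zq_subset_flip_coords assms(1,2) by blast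
  then show ?thesis using X_inj assms(1,2,6) X_eq_tau_un_y by metis
qed

lemma finite_H: "finite H"
  unfolding H_def by simp

lemma H_subset: "H \<subseteq> {..<n}"
  unfolding H_def using head_le_n by auto

lemma Zp_H_disjoint: "j < k \<Longrightarrow> Zp j \<inter> H = {}"
  and Zq_H_disjoint: "j < k \<Longrightarrow> Zq j \<inter> H = {}"
  using Zp_subset Zq_subset unfolding H_def by fastforce+

lemma y_H_disjoint: "y j \<inter> H = {}"
  unfolding y_def by auto

lemma p_H_disjoint: "j < k \<Longrightarrow> p j \<inter> H = {}"
  and q_H_disjoint: "j < k \<Longrightarrow> q j \<inter> H = {}"
  unfolding p_def q_def using y_H_disjoint Zp_H_disjoint Zq_H_disjoint by blast+

lemma y_subset: "j < k \<Longrightarrow> y j \<subseteq> {..<n}"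
  unfolding y_def using X_subset by blast

lemma p_subset: "j < k \<Longrightarrow> p j \<subseteq> {..<n}"
  and q_subset: "j < k \<Longrightarrow> q j \<subseteq> {..<n}"
  unfolding p_def q_def using y_subset Zp_subset Zq_subset by fastforce+

lemma finite_Zp: "j < k \<Longrightarrow> finite (Zp j)" and finite_Zq: "j < k \<Longrightarrow> finite (Zq j)"
  using Zp_subset Zq_subset by (meson finite_atLeastLessThan finite_subset)+

lemma finite_p: "j < k \<Longrightarrow> finite (p j)" and finite_q: "j < k \<Longrightarrow> finite (q j)"
  using p_subset q_subset by (meson finite_lessThan finite_subset)+

lemma finite_beta: "j < k \<Longrightarrow> finite (beta j)"
  using beta_subset_H finite_H by (rule finite_subset)

lemma finite_tau: "finite (tau j)"
  using tau_subset_H finite_H by (rule finite_subset)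

lemma head_tail_split: "T \<subseteq> H \<Longrightarrow> R \<inter> H = {} \<Longrightarrow> (T \<union> R) \<inter> H = T \<and> (T \<union> R) - H = R"
  by blast

definition enter_dirs :: "nat \<Rightarrow> nat list" where
  "enter_dirs j = sorted_list_of_set (sym_diff (beta (prv j)) (tau j))"
definition visit_dirs :: "nat \<Rightarrow> nat list" where
  "visit_dirs j = sorted_list_of_set (Zp j) @ sorted_list_of_set (Zq j)"
definition leave_dirs :: "nat \<Rightarrow> nat list" where
  "leave_dirs j = sorted_list_of_set (sym_diff (tau j) (beta j))"
definition shift_dirs :: "nat \<Rightarrow> nat list" where
  "shift_dirs j = sorted_list_of_set (sym_diff (q j) (p (nxt j)))"
definition segment_dirs :: "nat \<Rightarrow> nat list" where
  "segment_dirs j = enter_dirs j @ visit_dirs j @ leave_dirs j @ shift_dirs j"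
definition start :: "nat \<Rightarrow> nat set" where
  "start j = beta (prv j) \<union> p (j mod k)"
definition cycle_dirs :: "nat list" where
  "cycle_dirs = concat (map segment_dirs [0..<k])"

lemma set_enter_dirs: "j < k \<Longrightarrow> set (enter_dirs j) = sym_diff (beta (prv j)) (tau j)"
  unfolding enter_dirs_def using finite_beta[OF prv_less] finite_tau by simp

lemma set_visit_dirs: "j < k \<Longrightarrow> set (visit_dirs j) = Zp j \<union> Zq j"
  unfolding visit_dirs_def using finite_Zp finite_Zq by simp

lemma set_leave_dirs: "j < k \<Longrightarrow> set (leave_dirs j) = sym_diff (tau j) (beta j)"
  unfolding leave_dirs_def using finite_beta finite_tau by simp

lemma set_shift_dirs: "j < k \<Longrightarrow> set (shift_dirs j) = sym_diff (q j) (p (nxt j))"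
  unfolding shift_dirs_def using finite_q finite_p[OF nxt_less] by simp

lemma distinct_enter_dirs: "distinct (enter_dirs j)"
  and distinct_visit_dirs: "j < k \<Longrightarrow> distinct (visit_dirs j)"
  and distinct_leave_dirs: "distinct (leave_dirs j)"
  and distinct_shift_dirs: "distinct (shift_dirs j)"
  unfolding enter_dirs_def visit_dirs_def leave_dirs_def shift_dirs_def
  using finite_Zp finite_Zq Zp_Zq_disjoint by simp_all

lemma start_eq: "j < k \<Longrightarrow> start j = beta (prv j) \<union> p j"
  unfolding start_def by simp

lemma flip_end_enter: "j < k \<Longrightarrow> flip_end (start j) (enter_dirs j) = tau j \<union> p j"
proof -
  assume j: "j < k"
  have "flip_end (start j) (enter_dirs j) = sym_diff (beta (prv j) \<union> p j) (sym_diff (beta (prv j)) (tau j))"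
    using flip_end_distinct[OF distinct_enter_dirs] set_enter_dirs[OF j] start_eq[OF j] by simp
  also have "\<dots> = sym_diff (beta (prv j)) (sym_diff (beta (prv j)) (tau j)) \<union> p j"
    using beta_subset_H[OF prv_less] tau_subset_H p_H_disjoint[OF j]
    by (intro sym_diff_Un_disjoint) blast
  also have "\<dots> = tau j \<union> p j" by blast
  finally show ?thesis .
qed

lemma flip_end_visit: "j < k \<Longrightarrow> flip_end (tau j \<union> p j) (visit_dirs j) = tau j \<union> q j"
proof -
  assume j: "j < k"
  have "flip_end (tau j \<union> p j) (visit_dirs j) = sym_diff (p j \<union> tau j) (Zp j \<union> Zq j)"
    using flip_end_distinct[OF distinct_visit_dirs[OF j]] set_visit_dirs[OF j] by (simp add: Un_commute)
  also have "\<dots> = sym_diff (p j) (Zp j \<union> Zq j) \<union> tau j"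
    using Zp_H_disjoint[OF j] Zq_H_disjoint[OF j] tau_subset_H by (intro sym_diff_Un_disjoint) blast
  also have "sym_diff (p j) (Zp j \<union> Zq j) = q j"
    unfolding p_def q_def using Zp_Zq_disjoint[OF j j] by blast
  finally show ?thesis by (simp add: Un_commute)
qed

lemma flip_end_leave: "j < k \<Longrightarrow> flip_end (tau j \<union> q j) (leave_dirs j) = beta j \<union> q j"
proof -
  assume j: "j < k"
  have "flip_end (tau j \<union> q j) (leave_dirs j) = sym_diff (tau j \<union> q j) (sym_diff (tau j) (beta j))"
    using flip_end_distinct[OF distinct_leave_dirs] set_leave_dirs[OF j] by simp
  also have "\<dots> = sym_diff (tau j) (sym_diff (tau j) (beta j)) \<union> q j"
    using beta_subset_H[OF j] tau_subset_H q_H_disjoint[OF j] by (intro sym_diff_Un_disjoint) blast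
  also have "\<dots> = beta j \<union> q j" by blast
  finally show ?thesis .
qed

lemma flip_end_shift: "j < k \<Longrightarrow> flip_end (beta j \<union> q j) (shift_dirs j) = start (Suc j)"
proof -
  assume j: "j < k"
  have "flip_end (beta j \<union> q j) (shift_dirs j) = sym_diff (q j \<union> beta j) (sym_diff (q j) (p (nxt j)))"
    using flip_end_distinct[OF distinct_shift_dirs] set_shift_dirs[OF j] by (simp add: Un_commute)
  also have "\<dots> = sym_diff (q j) (sym_diff (q j) (p (nxt j))) \<union> beta j"
    using beta_subset_H[OF j] q_H_disjoint[OF j] p_H_disjoint[OF nxt_less]
    by (intro sym_diff_Un_disjoint) blast
  also have "\<dots> = beta j \<union> p (nxt j)" by blast
  also have "\<dots> = start (Suc j)" unfolding start_def prv_Suc[OF j] nxt_def by simp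
  finally show ?thesis .
qed

lemma flip_walk_segment: "j < k \<Longrightarrow> flip_walk (start j) (segment_dirs j) =
   flip_walk (start j) (enter_dirs j) @ flip_walk (tau j \<union> p j) (visit_dirs j) @
   flip_walk (tau j \<union> q j) (leave_dirs j) @ flip_walk (beta j \<union> q j) (shift_dirs j)"
  unfolding segment_dirs_def
  by (simp add: flip_walk_append flip_end_append flip_end_enter flip_end_visit flip_end_leave)

lemma flip_steps_segment: "j < k \<Longrightarrow> flip_steps (start j) (segment_dirs j) =
   flip_steps (start j) (enter_dirs j) @ flip_steps (tau j \<union> p j) (visit_dirs j) @
   flip_steps (tau j \<union> q j) (leave_dirs j) @ flip_steps (beta j \<union> q j) (shift_dirs j)"
  unfolding segment_dirs_def
  by (simp add: flip_steps_append flip_end_append flip_end_enter flip_end_visit flip_end_leave)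

lemma flip_end_segment: "j < k \<Longrightarrow> flip_end (start j) (segment_dirs j) = start (Suc j)"
  unfolding segment_dirs_def
  by (simp add: flip_end_append flip_end_enter flip_end_visit flip_end_leave flip_end_shift)

lemma cycle_dirs_concat:
  "flip_walk (start 0) cycle_dirs = concat (map (\<lambda>j. flip_walk (start j) (segment_dirs j)) [0..<k])"
  "flip_steps (start 0) cycle_dirs = concat (map (\<lambda>j. flip_steps (start j) (segment_dirs j)) [0..<k])"
  "flip_end (start 0) cycle_dirs = start k"
  unfolding cycle_dirs_def using flip_walk_concat[of k start segment_dirs] flip_end_segment by blast+

lemma start_k: "start k = start 0"
proof -
  have "k + k - 1 = (k - 1) + k" using two_le_k by simp
  then have "(k + k - 1) mod k = (k - 1) mod k" by simp
  also have "\<dots> = k - 1" using two_le_k by simp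
  finally have "(k + k - 1) mod k = k - 1" .
  then show ?thesis unfolding start_def prv_def using two_le_k by simp
qed

lemma flip_end_cycle_dirs: "flip_end (start 0) cycle_dirs = start 0"
  using cycle_dirs_concat(3) start_k by simp

definition entering :: "nat \<Rightarrow> nat set \<Rightarrow> bool" where
  "entering j V \<longleftrightarrow> V - H = p j \<and> (\<exists>Z. Z \<subseteq> sym_diff (beta (prv j)) (tau j) \<and>
     Z \<noteq> sym_diff (beta (prv j)) (tau j) \<and> V \<inter> H = sym_diff (beta (prv j)) Z)"
definition visiting :: "nat \<Rightarrow> nat set \<Rightarrow> bool" where
  "visiting j V \<longleftrightarrow> V \<inter> H = tau j \<and> (\<exists>Z. Z \<subseteq> Zp j \<union> Zq j \<and> V - H = sym_diff (y j) Z) \<and>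
     V - H \<noteq> q j"
definition leaving :: "nat \<Rightarrow> nat set \<Rightarrow> bool" where
  "leaving j V \<longleftrightarrow> V - H = q j \<and> (\<exists>Z. Z \<subseteq> sym_diff (tau j) (beta j) \<and>
     Z \<noteq> sym_diff (tau j) (beta j) \<and> V \<inter> H = sym_diff (tau j) Z)"
definition shifting :: "nat \<Rightarrow> nat set \<Rightarrow> bool" where
  "shifting j V \<longleftrightarrow> V \<inter> H = beta j \<and> V - H \<noteq> p (nxt j)"

lemma entering_if_mem:
  assumes "j < k" "V \<in> set (flip_walk (start j) (enter_dirs j))"
  shows "entering j V"
proof -
  obtain Z where Z: "Z \<subseteq> sym_diff (beta (prv j)) (tau j)" "Z \<noteq> sym_diff (beta (prv j)) (tau j)"
      "V = sym_diff (start j) Z"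
    using flip_walk_memE[OF distinct_enter_dirs assms(2)] set_enter_dirs[OF assms(1)] by metis
  have ZH: "Z \<subseteq> H" using Z(1) beta_subset_H[OF prv_less] tau_subset_H by blast
  then have "V = sym_diff (beta (prv j)) Z \<union> p j"
    using Z(3) start_eq[OF assms(1)] sym_diff_Un_disjoint p_H_disjoint[OF assms(1)] by blast
  moreover have "sym_diff (beta (prv j)) Z \<subseteq> H" using beta_subset_H[OF prv_less] ZH by blast
  ultimately have "V \<inter> H = sym_diff (beta (prv j)) Z" "V - H = p j"
    using head_tail_split p_H_disjoint[OF assms(1)] by auto
  then show ?thesis unfolding entering_def using Z(1,2) by blast
qed

lemma visiting_if_mem:
  assumes "j < k" "V \<in> set (flip_walk (tau j \<union> p j) (visit_dirs j))"
  shows "visiting j V"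
proof -
  obtain Z where Z: "Z \<subseteq> Zp j \<union> Zq j" "Z \<noteq> Zp j \<union> Zq j" "V = sym_diff (tau j \<union> p j) Z"
    using flip_walk_memE[OF distinct_visit_dirs[OF assms(1)] assms(2)] set_visit_dirs[OF assms(1)]
    by metis
  have ZH: "Z \<inter> H = {}" using Z(1) Zp_H_disjoint[OF assms(1)] Zq_H_disjoint[OF assms(1)] by blast
  have tail: "sym_diff (p j) Z \<inter> H = {}" using ZH p_H_disjoint[OF assms(1)] by blast
  have "V = sym_diff (p j) Z \<union> tau j"
    using Z(3) sym_diff_Un_disjoint[of Z "tau j" "p j"] ZH tau_subset_H by (auto simp: Un_commute)
  then have head: "V \<inter> H = tau j" and tailV: "V - H = sym_diff (p j) Z"
    using tail tau_subset_H by blast+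
  have flip: "sym_diff (p j) Z = sym_diff (y j) (sym_diff (Zp j) Z)" unfolding p_def by blast
  have "sym_diff (Zp j) Z \<subseteq> Zp j \<union> Zq j" using Z(1) by blast
  moreover have "V - H \<noteq> q j"
  proof
    assume "V - H = q j"
    then have "sym_diff (Zp j) Z = Zq j" using tailV flip sym_diff_left_cancel unfolding q_def by metis
    then have "Z = Zp j \<union> Zq j" using Zp_Zq_disjoint[OF assms(1) assms(1)] by blast
    then show False using Z(2) by simp
  qed
  ultimately show ?thesis unfolding visiting_def using head tailV flip by blast
qed

lemma leaving_if_mem:
  assumes "j < k" "V \<in> set (flip_walk (tau j \<union> q j) (leave_dirs j))"
  shows "leaving j V"
proof -
  obtain Z where Z: "Z \<subseteq> sym_diff (tau j) (beta j)" "Z \<noteq> sym_diff (tau j) (beta j)"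
      "V = sym_diff (tau j \<union> q j) Z"
    using flip_walk_memE[OF distinct_leave_dirs assms(2)] set_leave_dirs[OF assms(1)] by metis
  have ZH: "Z \<subseteq> H" using Z(1) beta_subset_H[OF assms(1)] tau_subset_H by blast
  then have "V = sym_diff (tau j) Z \<union> q j"
    using Z(3) sym_diff_Un_disjoint q_H_disjoint[OF assms(1)] by blast
  moreover have "sym_diff (tau j) Z \<subseteq> H" using tau_subset_H ZH by blast
  ultimately have "V \<inter> H = sym_diff (tau j) Z" "V - H = q j"
    using head_tail_split q_H_disjoint[OF assms(1)] by auto
  then show ?thesis unfolding leaving_def using Z(1,2) by blast
qed

lemma shifting_if_mem:
  assumes "j < k" "V \<in> set (flip_walk (beta j \<union> q j) (shift_dirs j))"
  shows "shifting j V"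
proof -
  obtain Z where Z: "Z \<subseteq> sym_diff (q j) (p (nxt j))" "Z \<noteq> sym_diff (q j) (p (nxt j))"
      "V = sym_diff (beta j \<union> q j) Z"
    using flip_walk_memE[OF distinct_shift_dirs assms(2)] set_shift_dirs[OF assms(1)] by metis
  have ZH: "Z \<inter> H = {}" using Z(1) q_H_disjoint[OF assms(1)] p_H_disjoint[OF nxt_less] by blast
  have tail: "sym_diff (q j) Z \<inter> H = {}" using ZH q_H_disjoint[OF assms(1)] by blast
  have "V = sym_diff (q j) Z \<union> beta j"
    using Z(3) sym_diff_Un_disjoint[of Z "beta j" "q j"] ZH beta_subset_H[OF assms(1)]
    by (auto simp: Un_commute)
  then have "V \<inter> H = beta j" "V - H = sym_diff (q j) Z"
    using tail beta_subset_H[OF assms(1)] by blast+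
  moreover have "sym_diff (q j) Z \<noteq> p (nxt j)" using sym_diff_proper_subset_ne[OF Z(1,2)] .
  ultimately show ?thesis unfolding shifting_def by simp
qed

lemma entering_imp_eq: "j < k \<Longrightarrow> l < k \<Longrightarrow> entering j V \<Longrightarrow> entering l V \<Longrightarrow> j = l"
  unfolding entering_def using p_inj by metis

lemma visiting_imp_eq:
  assumes "j < k" "l < k" "visiting j V" "visiting l V"
  shows "j = l"
proof -
  obtain Z where "Z \<subseteq> Zp j \<union> Zq j" "V - H = sym_diff (y j) Z"
    using assms(3) unfolding visiting_def by blast
  moreover obtain Z' where "Z' \<subseteq> Zp l \<union> Zq l" "V - H = sym_diff (y l) Z'"
    using assms(4) unfolding visiting_def by blast
  moreover have "tau j = tau l" using assms(3,4) unfolding visiting_def by simp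
  ultimately show ?thesis using same_head_tail_flip_imp[OF assms(1,2)] by metis
qed

lemma leaving_imp_eq: "j < k \<Longrightarrow> l < k \<Longrightarrow> leaving j V \<Longrightarrow> leaving l V \<Longrightarrow> j = l"
  unfolding leaving_def using q_inj by metis

lemma shifting_imp_eq: "j < k \<Longrightarrow> l < k \<Longrightarrow> shifting j V \<Longrightarrow> shifting l V \<Longrightarrow> j = l"
  unfolding shifting_def using beta_inj by metis

lemma not_entering_visiting:
  assumes "j < k" "l < k" "entering j V" "visiting l V"
  shows False
proof -
  obtain Z where Z: "Z \<subseteq> Zp l \<union> Zq l" "V - H = sym_diff (y l) Z"
    using assms(4) unfolding visiting_def by blast
  then have "j = l" using p_eq_tail_flip_imp[OF assms(1,2) Z(1)] assms(3) unfolding entering_def by simp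
  obtain Z' where "Z' \<subseteq> sym_diff (beta (prv j)) (tau j)" "Z' \<noteq> sym_diff (beta (prv j)) (tau j)"
      "V \<inter> H = sym_diff (beta (prv j)) Z'"
    using assms(3) unfolding entering_def by blast
  moreover have "V \<inter> H = tau j" using assms(4) \<open>j = l\<close> unfolding visiting_def by simp
  ultimately show False using sym_diff_proper_subset_ne by metis
qed

lemma not_entering_leaving: "j < k \<Longrightarrow> l < k \<Longrightarrow> entering j V \<Longrightarrow> leaving l V \<Longrightarrow> False"
  unfolding entering_def leaving_def using p_ne_q by metis

lemma not_entering_shifting:
  assumes "j < k" "l < k" "entering j V" "shifting l V"
  shows False
proof -
  obtain Z where Z: "Z \<subseteq> sym_diff (beta (prv j)) (tau j)" "V \<inter> H = sym_diff (beta (prv j)) Z"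
    using assms(3) unfolding entering_def by blast
  then have "beta l = sym_diff (beta (prv j)) Z" using assms(4) unfolding shifting_def by simp
  then have "l = prv j" using beta_ne_between_beta_tau[OF assms(1,2) _ Z(1)] by blast
  then have "nxt l = j" using nxt_prv assms(1) by simp
  then show False using assms(3,4) unfolding entering_def shifting_def by simp
qed

lemma not_visiting_leaving:
  assumes "j < k" "l < k" "visiting j V" "leaving l V"
  shows False
proof -
  obtain Z where Z: "Z \<subseteq> Zp j \<union> Zq j" "V - H = sym_diff (y j) Z"
    using assms(3) unfolding visiting_def by blast
  then have "l = j" using q_eq_tail_flip_imp[OF assms(2,1) Z(1)] assms(4) unfolding leaving_def by simp
  then show False using assms(3,4) unfolding visiting_def leaving_def by simp
qed

lemma not_visiting_shifting: "j < k \<Longrightarrow> l < k \<Longrightarrow> visiting j V \<Longrightarrow> shifting l V \<Longrightarrow> False"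
  unfolding visiting_def shifting_def using beta_ne_tau by metis

lemma not_leaving_shifting:
  assumes "j < k" "l < k" "leaving j V" "shifting l V"
  shows False
proof -
  obtain Z where Z: "Z \<subseteq> sym_diff (tau j) (beta j)" "Z \<noteq> sym_diff (tau j) (beta j)"
      "V \<inter> H = sym_diff (tau j) Z"
    using assms(3) unfolding leaving_def by blast
  have "beta l = sym_diff (tau j) Z" using Z(3) assms(4) unfolding shifting_def by simp
  moreover have "l = j \<or> beta l \<noteq> sym_diff (tau j) Z"
    using beta_ne_between_tau_beta[OF assms(1,2) _ Z(1)] by blast
  ultimately show False using sym_diff_proper_subset_ne[OF Z(1,2)] by metis
qed

definition cycle_sets :: "nat set list" where
  "cycle_sets = flip_walk (start 0) cycle_dirs"

lemma phase_if_mem_segment: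
  assumes "j < k" "V \<in> set (flip_walk (start j) (segment_dirs j))"
  shows "entering j V \<or> visiting j V \<or> leaving j V \<or> shifting j V"
  using assms(2) flip_walk_segment[OF assms(1)] entering_if_mem[OF assms(1)]
    visiting_if_mem[OF assms(1)] leaving_if_mem[OF assms(1)] shifting_if_mem[OF assms(1)]
  by auto

lemma distinct_segment_walk:
  assumes j: "j < k"
  shows "distinct (flip_walk (start j) (segment_dirs j))"
proof -
  let ?A = "flip_walk (start j) (enter_dirs j)" and ?B = "flip_walk (tau j \<union> p j) (visit_dirs j)"
    and ?C = "flip_walk (tau j \<union> q j) (leave_dirs j)" and ?D = "flip_walk (beta j \<union> q j) (shift_dirs j)"
  have "distinct ?A" "distinct ?B" "distinct ?C" "distinct ?D"
    using distinct_flip_walk distinct_enter_dirs distinct_visit_dirs[OF j] distinct_leave_dirs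
      distinct_shift_dirs by blast+
  moreover have "set ?A \<inter> set ?B = {}"
    using entering_if_mem[OF j] visiting_if_mem[OF j] not_entering_visiting[OF j j] by blast
  moreover have "set ?A \<inter> set ?C = {}"
    using entering_if_mem[OF j] leaving_if_mem[OF j] not_entering_leaving[OF j j] by blast
  moreover have "set ?A \<inter> set ?D = {}"
    using entering_if_mem[OF j] shifting_if_mem[OF j] not_entering_shifting[OF j j] by blast
  moreover have "set ?B \<inter> set ?C = {}"
    using visiting_if_mem[OF j] leaving_if_mem[OF j] not_visiting_leaving[OF j j] by blast
  moreover have "set ?B \<inter> set ?D = {}"
    using visiting_if_mem[OF j] shifting_if_mem[OF j] not_visiting_shifting[OF j j] by blast
  moreover have "set ?C \<inter> set ?D = {}"
    using leaving_if_mem[OF j] shifting_if_mem[OF j] not_leaving_shifting[OF j j] by blast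
  ultimately show ?thesis using flip_walk_segment[OF j] by auto
qed

lemma segment_walks_disjoint:
  assumes "j < k" "l < k" "j \<noteq> l"
  shows "set (flip_walk (start j) (segment_dirs j)) \<inter> set (flip_walk (start l) (segment_dirs l)) = {}"
proof (rule ccontr)
  assume "\<not> ?thesis"
  then obtain V where "V \<in> set (flip_walk (start j) (segment_dirs j))"
      "V \<in> set (flip_walk (start l) (segment_dirs l))" by blast
  then have "entering j V \<or> visiting j V \<or> leaving j V \<or> shifting j V"
      "entering l V \<or> visiting l V \<or> leaving l V \<or> shifting l V"
    using phase_if_mem_segment assms(1,2) by blast+
  then show False
    using assms entering_imp_eq visiting_imp_eq leaving_imp_eq shifting_imp_eq
      not_entering_visiting not_entering_leaving not_entering_shifting not_visiting_leaving
      not_visiting_shifting not_leaving_shifting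
    by metis
qed

lemma distinct_cycle_sets: "distinct cycle_sets"
  unfolding cycle_sets_def cycle_dirs_concat(1)
  by (rule distinct_concat_upt) (use distinct_segment_walk segment_walks_disjoint in auto)

lemma length_cycle_sets: "length cycle_sets = length cycle_dirs"
  unfolding cycle_sets_def by simp

lemma cycle_sets_step:
  assumes "i < length cycle_dirs"
  shows "cycle_sets ! (Suc i mod length cycle_dirs) = sym_diff (cycle_sets ! i) {cycle_dirs ! i}"
proof (cases "Suc i < length cycle_dirs")
  case True
  then show ?thesis using flip_walk_nth_step[OF assms] unfolding cycle_sets_def by simp
next
  case False
  then have "Suc i = length cycle_dirs" using assms by simp
  moreover have "cycle_sets ! 0 = start 0"
    unfolding cycle_sets_def using assms by (cases cycle_dirs) auto
  ultimately show ?thesis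
    using flip_walk_nth_step[OF assms, of "start 0"] False flip_end_cycle_dirs
    unfolding cycle_sets_def by simp
qed

lemma set_segment_dirs_subset: "j < k \<Longrightarrow> set (segment_dirs j) \<subseteq> {..<n}"
proof -
  assume j: "j < k"
  have "set (enter_dirs j) \<subseteq> H" "set (leave_dirs j) \<subseteq> H"
    using set_enter_dirs[OF j] set_leave_dirs[OF j] beta_subset_H[OF prv_less] beta_subset_H[OF j]
      tau_subset_H by blast+
  moreover have "set (visit_dirs j) \<subseteq> {..<n}"
    using set_visit_dirs[OF j] Zp_subset[OF j] Zq_subset[OF j] by auto
  moreover have "set (shift_dirs j) \<subseteq> {..<n}"
    using set_shift_dirs[OF j] q_subset[OF j] p_subset[OF nxt_less] by blast
  ultimately show ?thesis unfolding segment_dirs_def using H_subset by auto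
qed

lemma set_cycle_dirs_subset: "set cycle_dirs \<subseteq> {..<n}"
proof
  fix x assume "x \<in> set cycle_dirs"
  then obtain j where "j < k" "x \<in> set (segment_dirs j)" unfolding cycle_dirs_def by auto
  then show "x \<in> {..<n}" using set_segment_dirs_subset by blast
qed

lemma cycle_sets_subset: "V \<in> set cycle_sets \<Longrightarrow> V \<subseteq> {..<n}"
proof -
  have "start 0 \<subseteq> {..<n}"
    using start_eq[of 0] two_le_k beta_subset_H[OF prv_less] H_subset p_subset[of 0] by auto
  then show "V \<in> set cycle_sets \<Longrightarrow> V \<subseteq> {..<n}"
    unfolding cycle_sets_def using flip_walk_subset set_cycle_dirs_subset by blast
qed

lemma X_in_cycle_sets:
  assumes j: "j < k"
  shows "X j \<in> set cycle_sets"
proof -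
  let ?m = "length (sorted_list_of_set (Zp j))"
  have m: "?m < length (visit_dirs j)"
    using Zq_nonempty[OF j] finite_Zq[OF j] unfolding visit_dirs_def by (simp add: card_gt_0_iff)
  have "set (take ?m (visit_dirs j)) = Zp j" unfolding visit_dirs_def using finite_Zp[OF j] by simp
  then have "flip_walk (tau j \<union> p j) (visit_dirs j) ! ?m = sym_diff (p j \<union> tau j) (Zp j)"
    using flip_walk_nth[OF distinct_visit_dirs[OF j] m] by (simp add: Un_commute)
  also have "\<dots> = sym_diff (p j) (Zp j) \<union> tau j"
    using Zp_H_disjoint[OF j] tau_subset_H by (intro sym_diff_Un_disjoint) blast
  also have "sym_diff (p j) (Zp j) = y j" unfolding p_def by blast
  finally have "X j \<in> set (flip_walk (tau j \<union> p j) (visit_dirs j))"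
    using m X_eq_tau_un_y[of j] by (metis Un_commute length_flip_walk nth_mem)
  then have "X j \<in> set (flip_walk (start j) (segment_dirs j))" using flip_walk_segment[OF j] by simp
  then show ?thesis unfolding cycle_sets_def cycle_dirs_concat(1) using j by auto
qed

lemma edge_label_eq: "edge_label k x = (fst x, snd x \<inter> H, if fst x \<in> H then card (snd x - H) mod (2*k) else 0)"
  unfolding edge_label_def H_def by simp

lemma distinct_edge_labels:
  assumes "distinct ds"
  shows "distinct (map (edge_label k) (flip_steps v ds))"
proof -
  have "distinct (map fst (map (edge_label k) (flip_steps v ds)))"
    using assms by (simp add: comp_def map_fst_flip_steps)
  then show ?thesis by (simp only: distinct_map)
qed

lemma enter_step:
  assumes "j < k" "x \<in> set (flip_steps (start j) (enter_dirs j))"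
  shows "fst x \<in> H \<and> snd x - H = p j"
proof -
  obtain W where "W \<in> set (flip_walk (start j) (enter_dirs j))" "fst x \<in> set (enter_dirs j)"
      "snd x = W - {fst x}"
    using assms(2) by (rule flip_steps_memE)
  moreover from this(1) have "W - H = p j"
    using entering_if_mem[OF assms(1)] unfolding entering_def by blast
  moreover have "set (enter_dirs j) \<subseteq> H"
    using set_enter_dirs[OF assms(1)] beta_subset_H[OF prv_less] tau_subset_H by blast
  ultimately show ?thesis by auto
qed

lemma visit_step:
  assumes "j < k" "x \<in> set (flip_steps (tau j \<union> p j) (visit_dirs j))"
  shows "fst x \<in> Zp j \<union> Zq j \<and> snd x \<inter> H = tau j"
proof -
  obtain W where "W \<in> set (flip_walk (tau j \<union> p j) (visit_dirs j))" "fst x \<in> Zp j \<union> Zq j"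
      "snd x = W - {fst x}"
    using assms(2) set_visit_dirs[OF assms(1)] by (metis flip_steps_memE)
  moreover from this(1) have "W \<inter> H = tau j"
    using visiting_if_mem[OF assms(1)] unfolding visiting_def by blast
  moreover have "fst x \<notin> H" using \<open>fst x \<in> Zp j \<union> Zq j\<close> Zp_H_disjoint[OF assms(1)]
      Zq_H_disjoint[OF assms(1)] by blast
  ultimately show ?thesis by auto
qed

lemma leave_step:
  assumes "j < k" "x \<in> set (flip_steps (tau j \<union> q j) (leave_dirs j))"
  shows "fst x \<in> H \<and> snd x - H = q j"
proof -
  obtain W where "W \<in> set (flip_walk (tau j \<union> q j) (leave_dirs j))" "fst x \<in> set (leave_dirs j)"
      "snd x = W - {fst x}"
    using assms(2) by (rule flip_steps_memE)
  moreover from this(1) have "W - H = q j"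
    using leaving_if_mem[OF assms(1)] unfolding leaving_def by blast
  moreover have "set (leave_dirs j) \<subseteq> H"
    using set_leave_dirs[OF assms(1)] beta_subset_H[OF assms(1)] tau_subset_H by blast
  ultimately show ?thesis by auto
qed

lemma shift_step:
  assumes "j < k" "x \<in> set (flip_steps (beta j \<union> q j) (shift_dirs j))"
  shows "fst x \<notin> H \<and> snd x \<inter> H = beta j"
proof -
  obtain W where "W \<in> set (flip_walk (beta j \<union> q j) (shift_dirs j))" "fst x \<in> set (shift_dirs j)"
      "snd x = W - {fst x}"
    using assms(2) by (rule flip_steps_memE)
  moreover from this(1) have "W \<inter> H = beta j"
    using shifting_if_mem[OF assms(1)] unfolding shifting_def by blast
  moreover have "set (shift_dirs j) \<inter> H = {}"
    using set_shift_dirs[OF assms(1)] q_H_disjoint[OF assms(1)] p_H_disjoint[OF nxt_less] by blast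
  ultimately show ?thesis by auto
qed

text \<open>The residues single out the segment of a head flip, and whether it happens before
  (tail p j) or after (tail q j) the visit of X j.\<close>
context
  assumes card_p_mod: "\<And>j. j < k \<Longrightarrow> card (p j) mod (2*k) = 2*j"
    and card_q_mod: "\<And>j. j < k \<Longrightarrow> card (q j) mod (2*k) = 2*j + 1"
begin

definition enter_label :: "nat \<Rightarrow> nat \<times> nat set \<times> nat \<Rightarrow> bool" where
  "enter_label j c \<longleftrightarrow> fst c \<in> H \<and> snd (snd c) = 2*j"
definition visit_label :: "nat \<Rightarrow> nat \<times> nat set \<times> nat \<Rightarrow> bool" where
  "visit_label j c \<longleftrightarrow> fst c \<in> Zp j \<union> Zq j \<and> fst (snd c) = tau j"
definition leave_label :: "nat \<Rightarrow> nat \<times> nat set \<times> nat \<Rightarrow> bool" where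
  "leave_label j c \<longleftrightarrow> fst c \<in> H \<and> snd (snd c) = 2*j + 1"
definition shift_label :: "nat \<Rightarrow> nat \<times> nat set \<times> nat \<Rightarrow> bool" where
  "shift_label j c \<longleftrightarrow> fst c \<notin> H \<and> fst (snd c) = beta j"

lemma enter_label_if_mem:
  assumes "j < k" "c \<in> set (map (edge_label k) (flip_steps (start j) (enter_dirs j)))"
  shows "enter_label j c"
proof -
  obtain x where "x \<in> set (flip_steps (start j) (enter_dirs j))" "c = edge_label k x"
    using assms(2) by auto
  then show ?thesis using enter_step[OF assms(1)] card_p_mod[OF assms(1)] unfolding enter_label_def edge_label_eq by auto
qed

lemma visit_label_if_mem:
  assumes "j < k" "c \<in> set (map (edge_label k) (flip_steps (tau j \<union> p j) (visit_dirs j)))"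
  shows "visit_label j c"
proof -
  obtain x where "x \<in> set (flip_steps (tau j \<union> p j) (visit_dirs j))" "c = edge_label k x"
    using assms(2) by auto
  then show ?thesis using visit_step[OF assms(1)] unfolding visit_label_def edge_label_eq by auto
qed

lemma leave_label_if_mem:
  assumes "j < k" "c \<in> set (map (edge_label k) (flip_steps (tau j \<union> q j) (leave_dirs j)))"
  shows "leave_label j c"
proof -
  obtain x where "x \<in> set (flip_steps (tau j \<union> q j) (leave_dirs j))" "c = edge_label k x"
    using assms(2) by auto
  then show ?thesis using leave_step[OF assms(1)] card_q_mod[OF assms(1)] unfolding leave_label_def edge_label_eq by auto
qed

lemma shift_label_if_mem:
  assumes "j < k" "c \<in> set (map (edge_label k) (flip_steps (beta j \<union> q j) (shift_dirs j)))"
  shows "shift_label j c"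
proof -
  obtain x where "x \<in> set (flip_steps (beta j \<union> q j) (shift_dirs j))" "c = edge_label k x"
    using assms(2) by auto
  then show ?thesis using shift_step[OF assms(1)] unfolding shift_label_def edge_label_eq by auto
qed

lemma flip_dir_notin_H: "j < k \<Longrightarrow> d \<in> Zp j \<union> Zq j \<Longrightarrow> d \<notin> H"
  using Zp_H_disjoint Zq_H_disjoint by blast

lemma enter_label_imp_eq: "enter_label j c \<Longrightarrow> enter_label l c \<Longrightarrow> j = l"
  unfolding enter_label_def by simp

lemma visit_label_imp_eq:
  assumes "j < k" "l < k" "visit_label j c" "visit_label l c"
  shows "j = l"
proof (rule ccontr)
  assume "j \<noteq> l"
  then have "(Zp j \<union> Zq j) \<inter> (Zp l \<union> Zq l) = {}"
    using Zp_disjoint Zq_disjoint Zp_Zq_disjoint assms(1,2) by blast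
  then show False using assms(3,4) unfolding visit_label_def by blast
qed

lemma leave_label_imp_eq: "leave_label j c \<Longrightarrow> leave_label l c \<Longrightarrow> j = l"
  unfolding leave_label_def by simp

lemma shift_label_imp_eq: "j < k \<Longrightarrow> l < k \<Longrightarrow> shift_label j c \<Longrightarrow> shift_label l c \<Longrightarrow> j = l"
  unfolding shift_label_def using beta_inj by metis

lemma not_enter_visit_label: "l < k \<Longrightarrow> enter_label j c \<Longrightarrow> visit_label l c \<Longrightarrow> False"
  unfolding enter_label_def visit_label_def using flip_dir_notin_H by blast

lemma not_enter_leave_label: "enter_label j c \<Longrightarrow> leave_label l c \<Longrightarrow> False"
  unfolding enter_label_def leave_label_def by presburger

lemma not_enter_shift_label: "enter_label j c \<Longrightarrow> shift_label l c \<Longrightarrow> False"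
  unfolding enter_label_def shift_label_def by simp

lemma not_visit_leave_label: "j < k \<Longrightarrow> visit_label j c \<Longrightarrow> leave_label l c \<Longrightarrow> False"
  unfolding visit_label_def leave_label_def using flip_dir_notin_H by blast

lemma not_visit_shift_label: "j < k \<Longrightarrow> l < k \<Longrightarrow> visit_label j c \<Longrightarrow> shift_label l c \<Longrightarrow> False"
  unfolding visit_label_def shift_label_def using beta_ne_tau by metis

lemma not_leave_shift_label: "leave_label j c \<Longrightarrow> shift_label l c \<Longrightarrow> False"
  unfolding leave_label_def shift_label_def by simp

lemma distinct_segment_labels:
  assumes j: "j < k"
  shows "distinct (map (edge_label k) (flip_steps (start j) (segment_dirs j)))"
proof -
  let ?A = "map (edge_label k) (flip_steps (start j) (enter_dirs j))"
    and ?B = "map (edge_label k) (flip_steps (tau j \<union> p j) (visit_dirs j))"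
    and ?C = "map (edge_label k) (flip_steps (tau j \<union> q j) (leave_dirs j))"
    and ?D = "map (edge_label k) (flip_steps (beta j \<union> q j) (shift_dirs j))"
  have "distinct ?A" "distinct ?B" "distinct ?C" "distinct ?D"
    using distinct_edge_labels distinct_enter_dirs distinct_visit_dirs[OF j] distinct_leave_dirs
      distinct_shift_dirs by blast+
  moreover have "set ?A \<inter> set ?B = {}"
    using enter_label_if_mem[OF j] visit_label_if_mem[OF j] not_enter_visit_label[OF j] by blast
  moreover have "set ?A \<inter> set ?C = {}"
    using enter_label_if_mem[OF j] leave_label_if_mem[OF j] not_enter_leave_label by blast
  moreover have "set ?A \<inter> set ?D = {}"
    using enter_label_if_mem[OF j] shift_label_if_mem[OF j] not_enter_shift_label by blast
  moreover have "set ?B \<inter> set ?C = {}"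
    using visit_label_if_mem[OF j] leave_label_if_mem[OF j] not_visit_leave_label[OF j] by blast
  moreover have "set ?B \<inter> set ?D = {}"
    using visit_label_if_mem[OF j] shift_label_if_mem[OF j] not_visit_shift_label[OF j j] by blast
  moreover have "set ?C \<inter> set ?D = {}"
    using leave_label_if_mem[OF j] shift_label_if_mem[OF j] not_leave_shift_label by blast
  ultimately show ?thesis using flip_steps_segment[OF j]
    by (simp only: map_append distinct_append set_append Int_Un_distrib) simp
qed

lemma segment_label_phases:
  assumes "j < k" "c \<in> set (map (edge_label k) (flip_steps (start j) (segment_dirs j)))"
  shows "enter_label j c \<or> visit_label j c \<or> leave_label j c \<or> shift_label j c"
  using assms(2) flip_steps_segment[OF assms(1)] enter_label_if_mem[OF assms(1)]
    visit_label_if_mem[OF assms(1)] leave_label_if_mem[OF assms(1)] shift_label_if_mem[OF assms(1)]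
  by (simp only: map_append set_append Un_iff) blast

lemma segment_labels_disjoint:
  assumes "j < k" "l < k" "j \<noteq> l"
  shows "set (map (edge_label k) (flip_steps (start j) (segment_dirs j))) \<inter>
    set (map (edge_label k) (flip_steps (start l) (segment_dirs l))) = {}"
proof (rule ccontr)
  assume "\<not> ?thesis"
  then obtain c where "c \<in> set (map (edge_label k) (flip_steps (start j) (segment_dirs j)))"
      "c \<in> set (map (edge_label k) (flip_steps (start l) (segment_dirs l)))" by blast
  then have "enter_label j c \<or> visit_label j c \<or> leave_label j c \<or> shift_label j c"
      "enter_label l c \<or> visit_label l c \<or> leave_label l c \<or> shift_label l c"
    using segment_label_phases assms(1,2) by blast+
  then show False
    using assms enter_label_imp_eq visit_label_imp_eq leave_label_imp_eq shift_label_imp_eq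
      not_enter_visit_label not_enter_leave_label not_enter_shift_label not_visit_leave_label
      not_visit_shift_label not_leave_shift_label
    by metis
qed

lemma distinct_cycle_labels: "distinct (map (edge_label k) (flip_steps (start 0) cycle_dirs))"
proof -
  have "map (edge_label k) (flip_steps (start 0) cycle_dirs) =
      concat (map (\<lambda>j. map (edge_label k) (flip_steps (start j) (segment_dirs j))) [0..<k])"
    unfolding cycle_dirs_concat(2) by (simp add: map_concat comp_def)
  then show ?thesis
    using distinct_concat_upt[of k "\<lambda>j. map (edge_label k) (flip_steps (start j) (segment_dirs j))"]
      distinct_segment_labels segment_labels_disjoint by simp
qed

end

definition cube_cycle :: "bool list list" where
  "cube_cycle = map (bits n) cycle_sets"

lemma length_cube_cycle: "length cube_cycle = length cycle_dirs"
  unfolding cube_cycle_def using length_cycle_sets by simp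

lemma two_le_length_segment_dirs:
  assumes "j < k"
  shows "2 \<le> length (segment_dirs j)"
proof -
  have "0 < card (Zp j)" "0 < card (Zq j)"
    using finite_Zp[OF assms] finite_Zq[OF assms] Zp_nonempty[OF assms] Zq_nonempty[OF assms]
    by (simp_all add: card_gt_0_iff)
  then show ?thesis unfolding segment_dirs_def visit_dirs_def by simp
qed

lemma four_le_length_cycle_dirs: "4 \<le> length cycle_dirs"
proof -
  have "[0..<k] = 0 # 1 # [2..<k]" using two_le_k by (simp add: upt_conv_Cons numeral_2_eq_2)
  then have "length cycle_dirs \<ge> length (segment_dirs 0) + length (segment_dirs 1)"
    unfolding cycle_dirs_def by simp
  then show ?thesis using two_le_length_segment_dirs[of 0] two_le_length_segment_dirs[of 1] two_le_k
    by linarith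
qed

lemma cube_cycle_nth: "i < length cycle_dirs \<Longrightarrow> cube_cycle ! i = bits n (cycle_sets ! i)"
  unfolding cube_cycle_def using length_cycle_sets by simp

lemma cube_cycle_next:
  assumes "i < length cycle_dirs"
  shows "cube_cycle ! (Suc i mod length cube_cycle) = bits n (sym_diff (cycle_sets ! i) {cycle_dirs ! i})"
proof -
  have "0 < length cycle_dirs" using assms by linarith
  then have "Suc i mod length cycle_dirs < length cycle_dirs" by simp
  then show ?thesis using cube_cycle_nth cycle_sets_step[OF assms] length_cube_cycle by simp
qed

lemma cycle_sets_nth_subset: "i < length cycle_dirs \<Longrightarrow> cycle_sets ! i \<subseteq> {..<n}"
  using cycle_sets_subset length_cycle_sets by (metis nth_mem)

lemma cycle_dirs_nth_less: "i < length cycle_dirs \<Longrightarrow> cycle_dirs ! i < n"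
  using set_cycle_dirs_subset nth_mem by blast

lemma is_cycle_cube_cycle: "is_cycle (cube_vertices n) (cube_adj n) cube_cycle"
  unfolding is_cycle_def
proof (intro conjI allI impI)
  show "3 \<le> length cube_cycle" using four_le_length_cycle_dirs length_cube_cycle by simp
  show "distinct cube_cycle"
  proof -
    have "set cycle_sets \<subseteq> Pow {..<n}" using cycle_sets_subset by blast
    then show ?thesis unfolding cube_cycle_def
      using distinct_cycle_sets inj_on_subset[OF inj_on_bits] by (simp add: distinct_map)
  qed
  show "set cube_cycle \<subseteq> cube_vertices n"
    unfolding cube_cycle_def using bits_in_cube_vertices by auto
  fix i assume i: "i < length cube_cycle"
  then have "i < length cycle_dirs" by (simp add: length_cube_cycle)
  then show "cube_adj n (cube_cycle ! i) (cube_cycle ! (Suc i mod length cube_cycle))"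
    using cube_adj_bits_sym_diff_singleton[OF cycle_sets_nth_subset cycle_dirs_nth_less]
    by (simp add: cube_cycle_nth cube_cycle_next)
qed

lemma bits_X_in_cube_cycle: "j < k \<Longrightarrow> bits n (X j) \<in> set cube_cycle"
  unfolding cube_cycle_def using X_in_cycle_sets by simp

lemma cube_colour_cube_cycle_edge:
  assumes "i < length cycle_dirs"
  shows "cube_colour k {cube_cycle ! i, cube_cycle ! (Suc i mod length cube_cycle)} =
    encode_label (map (edge_label k) (flip_steps (start 0) cycle_dirs) ! i)"
  using cube_colour_edge[OF cycle_sets_nth_subset[OF assms] cycle_dirs_nth_less[OF assms]]
    cube_cycle_nth[OF assms] cube_cycle_next[OF assms] flip_steps_nth[OF assms] assms
  unfolding cycle_sets_def by simp

lemma rainbow_cube_cycle: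
  assumes "\<And>j. j < k \<Longrightarrow> card (p j) mod (2*k) = 2*j"
    and "\<And>j. j < k \<Longrightarrow> card (q j) mod (2*k) = 2*j + 1"
  shows "rainbow_cycle (cube_colour k) cube_cycle"
  unfolding rainbow_cycle_def
proof (rule inj_onI)
  fix e1 e2 assume "e1 \<in> cycle_edges cube_cycle" "e2 \<in> cycle_edges cube_cycle"
    and eq: "cube_colour k e1 = cube_colour k e2"
  then obtain i1 i2 where i: "i1 < length cycle_dirs" "i2 < length cycle_dirs"
      "e1 = {cube_cycle ! i1, cube_cycle ! (Suc i1 mod length cube_cycle)}"
      "e2 = {cube_cycle ! i2, cube_cycle ! (Suc i2 mod length cube_cycle)}"
    unfolding cycle_edges_def length_cube_cycle by blast
  let ?L = "map (edge_label k) (flip_steps (start 0) cycle_dirs)"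
  have "?L ! i1 = ?L ! i2"
    using eq i encode_edge_label_inj cube_colour_cube_cycle_edge by simp
  moreover have "distinct ?L" "i1 < length ?L" "i2 < length ?L"
    using distinct_cycle_labels[OF assms] i(1,2) by simp_all
  ultimately have "i1 = i2" using nth_eq_iff_index_eq by metis
  then show "e1 = e2" using i(3,4) by simp
qed

end

section \<open>The upper bound\<close>

lemma cube_set_enumerate:
  assumes "S \<subseteq> cube_vertices n" "card S = k"
  obtains X where "\<And>j. j < k \<Longrightarrow> X j \<subseteq> {..<n}" "\<And>j l. j < k \<Longrightarrow> l < k \<Longrightarrow> X j = X l \<Longrightarrow> j = l"
    "S = (\<lambda>j. bits n (X j)) ` {..<k}"
proof -
  have "finite S" using assms(1) finite_cube_vertices finite_subset by blast
  then obtain xs where xs: "distinct xs" "set xs = S" using finite_distinct_list by blast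
  then have len: "length xs = k" using assms(2) distinct_card by metis
  have lengths: "length (xs ! j) = n" if "j < k" for j
    using assms(1) xs(2) len that nth_mem unfolding cube_vertices_def by blast
  show ?thesis
  proof
    show "ones (xs ! j) \<subseteq> {..<n}" if "j < k" for j using ones_subset lengths[OF that] by metis
    show "j = l" if "j < k" "l < k" "ones (xs ! j) = ones (xs ! l)" for j l
      using that lengths bits_ones xs(1) len nth_eq_iff_index_eq by metis
    have "S = (\<lambda>j. xs ! j) ` {..<k}" using xs(2) len by (auto simp: set_conv_nth)
    also have "\<dots> = (\<lambda>j. bits n (ones (xs ! j))) ` {..<k}"
      by (rule image_cong) (simp_all add: lengths bits_ones)
    finally show "S = (\<lambda>j. bits n (ones (xs ! j))) ` {..<k}" .
  qed
qed

text \<open>The flip sets are carved out of 2k disjoint blocks of s free tail coordinates, avoiding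
  a set of at most k^2 coordinates that separates the tails of the X j.\<close>
lemma cycle_construction_exists:
  assumes "2 \<le> k" "1 \<le> s" "2*k + k*k + 2*k*s \<le> n"
    and X_subset: "\<And>j. j < k \<Longrightarrow> X j \<subseteq> {..<n}"
    and X_inj: "\<And>j l. j < k \<Longrightarrow> l < k \<Longrightarrow> X j = X l \<Longrightarrow> j = l"
  obtains Zp Zq where "cycle_construction k n X Zp Zq"
    "\<And>j. 4*k - 1 \<le> s \<Longrightarrow> j < k \<Longrightarrow> card (sym_diff (X j - {..<2*k}) (Zp j)) mod (2*k) = 2*j"
    "\<And>j. 4*k - 1 \<le> s \<Longrightarrow> j < k \<Longrightarrow> card (sym_diff (X j - {..<2*k}) (Zq j)) mod (2*k) = 2*j + 1"
proof -
  define Y where "Y = (\<lambda>j. X j - {..<2*k}) ` {..<k}"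
  have "finite Y" "card Y \<le> k" unfolding Y_def using card_image_le[of "{..<k}"] by auto
  then obtain Sep where Sep: "finite Sep" "card Sep \<le> k * k"
      "\<And>a b. a \<in> Y \<Longrightarrow> b \<in> Y \<Longrightarrow> a \<noteq> b \<Longrightarrow> sym_diff a b \<inter> Sep \<noteq> {}"
    using exists_separating_set[of Y] mult_le_mono[of "card Y" k "card Y" k] by (metis le_trans)
  define F where "F = {2*k..<n} - Sep"
  have "card {2*k..<n} - card Sep \<le> card F" unfolding F_def by (rule diff_card_le_card_Diff[OF Sep(1)])
  moreover have "card {2*k..<n} = n - 2*k" by simp
  ultimately have size: "(2*k) * s \<le> card F" using Sep(2) assms(3) by linarith
  have finite_F: "finite F" unfolding F_def by simp
  have pos: "0 < 2*k" using assms(1) by simp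
  have tails: "\<forall>t<2*k. finite (X (t div 2) - {..<2*k})"
  proof (intro allI impI)
    fix t assume "t < 2*k"
    then have "t div 2 < k" by simp
    then show "finite (X (t div 2) - {..<2*k})"
      using X_subset by (meson finite_Diff finite_lessThan finite_subset)
  qed
  obtain Z where "\<forall>t<2*k. Z t \<subseteq> F \<and> Z t \<noteq> {}" "\<forall>t<2*k. \<forall>u<2*k. t \<noteq> u \<longrightarrow> Z t \<inter> Z u = {}"
      "2 * (2*k) - 1 \<le> s \<longrightarrow> (\<forall>t<2*k. card (sym_diff (X (t div 2) - {..<2*k}) (Z t)) mod (2*k) = t)"
    using exists_disjoint_flip_sets_mod[of F "2*k" s "\<lambda>t. X (t div 2) - {..<2*k}",
        OF finite_F size assms(2) pos tails]
    by (elim exE conjE)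
  note Z = this[rule_format]
  show ?thesis
  proof
    show "cycle_construction k n X (\<lambda>j. Z (2*j)) (\<lambda>j. Z (2*j + 1))"
    proof (unfold_locales)
      fix j l assume j: "j < k" and l: "l < k"
      show "Z (2*j) \<noteq> {}" "Z (2*j + 1) \<noteq> {}" using Z(1) j by simp_all
      show "Z (2*j) \<subseteq> {2*k..<n}" "Z (2*j + 1) \<subseteq> {2*k..<n}"
        using Z(1)[of "2*j"] Z(1)[of "2*j + 1"] j unfolding F_def by auto
      have "2*j \<noteq> 2*l + 1" by presburger
      then show "Z (2*j) \<inter> Z (2*l + 1) = {}" using Z(2) j l by simp
      show "Z (2*j) \<inter> Z (2*l) = {}" "Z (2*j + 1) \<inter> Z (2*l + 1) = {}" if "j \<noteq> l"
        using Z(2) j l that by simp_all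
      show "\<exists>i \<in> sym_diff (X j - {..<2*k}) (X l - {..<2*k}). \<forall>m<k. i \<notin> Z (2*m) \<and> i \<notin> Z (2*m + 1)"
        if "X j - {..<2*k} \<noteq> X l - {..<2*k}"
      proof -
        have "X j - {..<2*k} \<in> Y" "X l - {..<2*k} \<in> Y" unfolding Y_def using j l by auto
        then have "sym_diff (X j - {..<2*k}) (X l - {..<2*k}) \<inter> Sep \<noteq> {}"
          using Sep(3) that by simp
        then obtain i where i: "i \<in> sym_diff (X j - {..<2*k}) (X l - {..<2*k})" "i \<in> Sep"
          by (meson disjoint_iff)
        have "i \<notin> Z t" if "t < 2*k" for t using Z(1)[OF that] i(2) unfolding F_def by blast
        then have "\<forall>m<k. i \<notin> Z (2*m) \<and> i \<notin> Z (2*m + 1)" by simp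
        then show ?thesis using i(1) by (rule bexI)
      qed
    qed (use assms in auto)
  next
    fix j assume "4*k - 1 \<le> s" "j < k"
    then show "card (sym_diff (X j - {..<2*k}) (Z (2*j))) mod (2*k) = 2*j"
      and "card (sym_diff (X j - {..<2*k}) (Z (2*j + 1))) mod (2*k) = 2*j + 1"
      using Z(3)[of "2*j"] Z(3)[of "2*j + 1"] by simp_all
  qed
qed

lemma cube_cycle_through:
  assumes "2 \<le> k" "S \<subseteq> cube_vertices n" "card S = k" "1 \<le> s" "2*k + k*k + 2*k*s \<le> n"
  obtains vs where "is_cycle (cube_vertices n) (cube_adj n) vs" "S \<subseteq> set vs"
    "4*k - 1 \<le> s \<Longrightarrow> rainbow_cycle (cube_colour k) vs"
proof -
  obtain X where X: "\<And>j. j < k \<Longrightarrow> X j \<subseteq> {..<n}" "\<And>j l. j < k \<Longrightarrow> l < k \<Longrightarrow> X j = X l \<Longrightarrow> j = l"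
      "S = (\<lambda>j. bits n (X j)) ` {..<k}"
    using cube_set_enumerate[OF assms(2,3)] by blast
  obtain Zp Zq where C: "cycle_construction k n X Zp Zq"
    and res: "\<And>j. 4*k - 1 \<le> s \<Longrightarrow> j < k \<Longrightarrow> card (sym_diff (X j - {..<2*k}) (Zp j)) mod (2*k) = 2*j"
      "\<And>j. 4*k - 1 \<le> s \<Longrightarrow> j < k \<Longrightarrow> card (sym_diff (X j - {..<2*k}) (Zq j)) mod (2*k) = 2*j + 1"
    using cycle_construction_exists[of k s n X, OF assms(1,4,5) X(1) X(2)] by blast
  interpret cycle_construction k n X Zp Zq by (rule C)
  show ?thesis
  proof
    show "is_cycle (cube_vertices n) (cube_adj n) cube_cycle" by (rule is_cycle_cube_cycle)
    show "S \<subseteq> set cube_cycle" using X(3) bits_X_in_cube_cycle by auto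
    assume "4*k - 1 \<le> s"
    then show "rainbow_cycle (cube_colour k) cube_cycle"
      using res by (intro rainbow_cube_cycle) (simp_all add: p_def q_def y_def H_def)
  qed
qed

lemma rainbow_connects_cube_colour:
  assumes "2 \<le> k" "9*k*k \<le> n"
  shows "rainbow_connects k (cube_vertices n) (cube_adj n) (cube_colour k)"
  unfolding rainbow_connects_def
proof (intro allI impI)
  fix S assume S: "S \<subseteq> cube_vertices n \<and> card S = k"
  have "2*k*(4*k - 1) + 2*k = 2*k*(4*k - 1 + 1)" by (simp only: add_mult_distrib2 mult_1_right)
  also have "4*k - 1 + 1 = 4*k" using assms(1) by simp
  finally have size: "2*k + k*k + 2*k*(4*k - 1) \<le> n" using assms(2) by simp
  have "1 \<le> 4*k - 1" using assms(1) by simp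
  then obtain vs where "is_cycle (cube_vertices n) (cube_adj n) vs" "S \<subseteq> set vs"
      "4*k - 1 \<le> 4*k - 1 \<Longrightarrow> rainbow_cycle (cube_colour k) vs"
    using cube_cycle_through[OF assms(1) conjunct1[OF S] conjunct2[OF S] _ size] by blast
  then show "\<exists>vs. is_cycle (cube_vertices n) (cube_adj n) vs \<and> S \<subseteq> set vs \<and>
      rainbow_cycle (cube_colour k) vs"
    by blast
qed

lemma cube_cycles_through:
  assumes "4 \<le> k" "4*k^2 \<le> n" "S \<subseteq> cube_vertices n" "card S = k"
  shows "\<exists>vs. is_cycle (cube_vertices n) (cube_adj n) vs \<and> S \<subseteq> set vs"
proof -
  have "4*k \<le> k*k" using assms(1) by simp
  then have "2*k + k*k + 2*k*1 \<le> n" using assms(2) by (simp add: power2_eq_square)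
    (use \<open>4*k \<le> k*k\<close> in linarith)
  moreover have "2 \<le> k" using assms(1) by simp
  ultimately show ?thesis using cube_cycle_through[of k S n 1] assms(3,4) by blast
qed

lemma cube_rainbow_colouring_linear:
  assumes "4 \<le> k" "4*k^2 \<le> n"
  obtains col where "rainbow_connects k (cube_vertices n) (cube_adj n) col"
    "card (col ` graph_edges (cube_vertices n) (cube_adj n)) \<le> (2^(2*k) * (2*k) + 4^(9*k*k)) * n"
proof (cases "9*k*k \<le> n")
  case True
  have "card (cube_colour k ` graph_edges (cube_vertices n) (cube_adj n)) \<le> n * 2^(2*k) * (2*k)"
    using card_cube_colours_le[of k n] assms(1) by simp
  also have "\<dots> \<le> (2^(2*k) * (2*k) + 4^(9*k*k)) * n" by simp
  finally show ?thesis using that rainbow_connects_cube_colour[OF _ True] assms(1) by simp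
next
  case False
  obtain col where col: "rainbow_connects k (cube_vertices n) (cube_adj n) col"
      "card (col ` graph_edges (cube_vertices n) (cube_adj n)) =
       card (graph_edges (cube_vertices n) (cube_adj n))"
    using rainbow_connects_injective_colouring[OF finite_cube_vertices] cube_cycles_through[OF assms]
    by metis
  have "card (graph_edges (cube_vertices n) (cube_adj n)) \<le> 2^n * 2^n"
    using card_graph_edges_le[OF finite_cube_vertices] by (simp add: card_cube_vertices)
  also have "\<dots> = 4^n" by (simp add: power_mult_distrib[symmetric])
  also have "\<dots> \<le> 4^(9*k*k)" using False by (intro power_increasing) auto
  also have "\<dots> \<le> (2^(2*k) * (2*k) + 4^(9*k*k)) * n"
  proof -
    have "1 \<le> n" using assms le_square[of k] unfolding power2_eq_square by linarith
    then have "4^(9*k*k) * 1 \<le> (2^(2*k) * (2*k) + 4^(9*k*k)) * n" by (intro mult_le_mono) simp_all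
    then show ?thesis by simp
  qed
  finally show ?thesis using that col by simp
qed

lemma crx_cube_bounds:
  assumes "4 \<le> k" "4 * k\<^sup>2 \<le> n"
  shows "n \<le> crx k (cube_vertices n) (cube_adj n)"
    and "crx k (cube_vertices n) (cube_adj n) \<le> (2^(2*k) * (2*k) + 4^(9*k*k)) * n"
proof -
  obtain col where col: "rainbow_connects k (cube_vertices n) (cube_adj n) col"
      "card (col ` graph_edges (cube_vertices n) (cube_adj n)) \<le> (2^(2*k) * (2*k) + 4^(9*k*k)) * n"
    using cube_rainbow_colouring_linear[OF assms] by blast
  then show "crx k (cube_vertices n) (cube_adj n) \<le> (2^(2*k) * (2*k) + 4^(9*k*k)) * n"
    using crx_le[OF col(1)] by linarith
  obtain col' where col': "rainbow_connects k (cube_vertices n) (cube_adj n) col'"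
      "card (col' ` graph_edges (cube_vertices n) (cube_adj n)) = crx k (cube_vertices n) (cube_adj n)"
    using crx_attained[OF col(1)] by blast
  have "k \<le> 4 * k\<^sup>2" using le_square[of k] by (simp add: power2_eq_square)
  then have "k \<le> n" using assms(2) by linarith
  then have "k \<le> 2 ^ n" using less_exp[of k] power_increasing[of k n "2::nat"] by linarith
  then show "n \<le> crx k (cube_vertices n) (cube_adj n)"
    using cube_colours_ge_dim[OF col'(1)] col'(2) assms(1) \<open>k \<le> n\<close> by simp
qed

theorem theorem3p7:
  fixes k :: nat
  assumes "k \<ge> 4"
  shows "\<exists>c C :: real. c > 0 \<and> C > 0 \<and>
    (\<forall>n :: nat. n \<ge> 4 * k\<^sup>2 \<longrightarrow>
       c * real n \<le> real (crx k (cube_vertices n) (cube_adj n)) \<and>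
       real (crx k (cube_vertices n) (cube_adj n)) \<le> C * real n)"
proof (intro exI conjI allI impI)
  let ?C = "2^(2*k) * (2*k) + 4^(9*k*k) :: nat"
  show "(0::real) < 1" by simp
  show "0 < real ?C" unfolding of_nat_0_less_iff by simp
  fix n :: nat assume "4 * k\<^sup>2 \<le> n"
  then show "1 * real n \<le> real (crx k (cube_vertices n) (cube_adj n))"
    and "real (crx k (cube_vertices n) (cube_adj n)) \<le> real ?C * real n"
    using crx_cube_bounds[OF assms] by (simp, metis of_nat_le_iff of_nat_mult)
qed

end
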